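(* Let $A\in\mathbb{R}^{m\times n}$ with $m<n$, let $x\in\mathbb{R}^n$, $\eta\in\mathbb{R}^m$, $y=Ax+\eta$, let $k\ge1$ be an integer, $S=\mathcal{L}_k(x)$, and let $\sigma_1,\sigma_m$ be the largest and smallest ($m$-th) singular values of $A$. Write $\gamma=\dfrac{1}{3\sqrt{\frac{1+\delta_{3k}}{1-\delta_{3k}}}+1}$. Suppose $\delta_{3k}<0.2119$, $$\epsilon>\max\left\{\sigma_1^2,\ \left(\frac{\sigma_1^2-\sigma_m^2}{\gamma-\delta_{3k}}-1\right)\sigma_1^2\right\},$$ and $$\epsilon+\sigma_1^2+(\delta_{3k}-\gamma)\frac{\epsilon+\sigma_1^2}{\sigma_1^2}<\lambda\le\epsilon+\sigma_m^2 .$$ Let $\{x^p\}$ be a sequence generated by the NTROT algorithm with these $A,y,k,\epsilon,\lambda$. Then for every $p\ge0$ for which $x^p$ is $k$-sparse (in particular for all $p\ge1$, and $p=0$ if $x^0$ is $k$-sparse), $$\|x^{p+1}-x_S\|_2\le\rho\|x^p-x_S\|_2+\tau\|Ax_{\overline S}+\eta\|_2,$$ where $$\rho=\sqrt{\frac{1+\delta_k}{1-\delta_{2k}}}\left(\delta_{2k}+2\delta_{3k}+3\sigma_1^2-\frac{3\lambda\sigma_1^2}{\epsilon+\sigma_1^2}\right)+\delta_{3k}+\sigma_1^2-\frac{\lambda\sigma_1^2}{\epsilon+\sigma_1^2}<1,$$ $$\tau=\frac{1}{\sqrt{1-\delta_{2k}}}\left(\frac{3\lambda\sigma_1\sqrt{1+\delta_k}}{\epsilon+\sigma_1^2}+2\right)+\frac{\lambda\sigma_1}{\epsilon+\sigma_1^2}.$$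 In particular, if $x$ is $k$-sparse and $\eta=0$, then $x^p\to x$ as $p\to\infty$.
   Context: Notation: $\|\cdot\|_2$ is the Euclidean norm; a vector is $k$-sparse if it has at most $k$ nonzero entries. For $\Omega\subseteq\{1,\dots,n\}$, $\overline\Omega$ is its complement and $x_\Omega$ is the vector obtained from $x$ by keeping the entries indexed by $\Omega$ and setting the others to zero. $\mathcal{L}_k(u)$ denotes the index set of the $k$ largest magnitudes of $u$ (ties broken arbitrarily), and $\mathcal{H}_k(u)=u_{\mathcal{L}_k(u)}$ is the hard thresholding operator. $u\otimes w$ is the entrywise (Hadamard) product; $\mathbf e=(1,\dots,1)^T\in\mathbb{R}^n$; $I$ is the $n\times n$ identity; vector inequalities are entrywise. The $q$-th order restricted isometry constant $\delta_q$ of $A$ is the smallest $\delta\ge0$ such that $(1-\delta)\|z\|_2^2\le\|Az\|_2^2\le(1+\delta)\|z\|_2^2$ for all $q$-sparse $z\in\mathbb{R}^n$. NTROT algorithm (Newton-type relaxed optimal $k$-thresholding): given $A$, $y$, $k$, $\epsilon>0$, $\lambda>0$ and an initial point $x^0\in\mathbb{R}^n$, for $p=0,1,2,\dots$ set $u^p=x^p+\lambda(A^TA+\epsilon I)^{-1}A^T(y-Ax^p)$, $w^p\in\arg\min_w\{\|y-A(u^p\otimes w)\|_2^2:\ \mathbf e^Tw=k,\ 0\le w\le\mathbf e\}$, $x^{p+1}=\mathcal{H}_k(u^p\otimes w^p)$. *)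

theory Defs
  imports "HOL-Analysis.Analysis"
begin

definition ksparse :: "nat \<Rightarrow> real^'n \<Rightarrow> bool" where
  "ksparse k z \<longleftrightarrow> card {i. z $ i \<noteq> 0} \<le> k"

definition restr :: "'n set \<Rightarrow> real^'n \<Rightarrow> real^'n" where
  "restr \<Omega> z = (\<chi> i. if i \<in> \<Omega> then z $ i else 0)"

definition hadamard :: "real^'n \<Rightarrow> real^'n \<Rightarrow> real^'n" where
  "hadamard u w = (\<chi> i. u $ i * w $ i)"

text \<open>L is an admissible choice of \<open>\<L>_k(u)\<close>: an index set of the k largest
  magnitudes of u (ties broken arbitrarily).\<close>

definition is_Lk :: "nat \<Rightarrow> real^'n \<Rightarrow> 'n set \<Rightarrow> bool" where
  "is_Lk k u L \<longleftrightarrow> card L = k \<and> (\<forall>i\<in>L. \<forall>j. j \<notin> L \<longrightarrow> \<bar>u $ j\<bar> \<le> \<bar>u $ i\<bar>)"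

definition rip_const :: "real^'n^'m \<Rightarrow> nat \<Rightarrow> real" where
  "rip_const A q = Inf {\<delta>. \<delta> \<ge> 0 \<and> (\<forall>z. ksparse q z \<longrightarrow>
      (1 - \<delta>) * (norm z)\<^sup>2 \<le> (norm (A *v z))\<^sup>2 \<and> (norm (A *v z))\<^sup>2 \<le> (1 + \<delta>) * (norm z)\<^sup>2)}"

text \<open>Singular values: the singular values of an m x n matrix A (m < n) are the square
  roots of the eigenvalues of the m x m matrix A A^T; the largest is sigma_1 and the
  smallest (the m-th) is sigma_m.\<close>

definition mat_eigenvalues :: "real^'m^'m \<Rightarrow> real set" where
  "mat_eigenvalues M = {\<mu>. \<exists>v. v \<noteq> 0 \<and> M *v v = \<mu> *\<^sub>R v}"

definition sigma_max :: "real^'n^'m \<Rightarrow> real" where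
  "sigma_max A = sqrt (Max (mat_eigenvalues (A ** transpose A)))"

definition sigma_min :: "real^'n^'m \<Rightarrow> real" where
  "sigma_min A = sqrt (Min (mat_eigenvalues (A ** transpose A)))"

definition ntrot_u :: "real^'n^'m \<Rightarrow> real^'m \<Rightarrow> real \<Rightarrow> real \<Rightarrow> real^'n \<Rightarrow> real^'n" where
  "ntrot_u A y eps lam xp =
     xp + lam *\<^sub>R (matrix_inv (transpose A ** A + eps *\<^sub>R mat 1) *v (transpose A *v (y - A *v xp)))"

definition ntrot_feasible :: "nat \<Rightarrow> real^'n \<Rightarrow> bool" where
  "ntrot_feasible k w \<longleftrightarrow> sum (\<lambda>i. w $ i) UNIV = real k \<and> (\<forall>i. 0 \<le> w $ i \<and> w $ i \<le> 1)"

definition ntrot_step :: "real^'n^'m \<Rightarrow> real^'m \<Rightarrow> nat \<Rightarrow> real \<Rightarrow> real \<Rightarrow> real^'n \<Rightarrow> real^'n \<Rightarrow> bool" where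
  "ntrot_step A y k eps lam xp xq \<longleftrightarrow>
     (let u = ntrot_u A y eps lam xp in
      \<exists>w L. ntrot_feasible k w \<and>
        (\<forall>w'. ntrot_feasible k w' \<longrightarrow>
           (norm (y - A *v hadamard u w))\<^sup>2 \<le> (norm (y - A *v hadamard u w'))\<^sup>2) \<and>
        is_Lk k (hadamard u w) L \<and> xq = restr L (hadamard u w))"

definition ntrot_seq :: "real^'n^'m \<Rightarrow> real^'m \<Rightarrow> nat \<Rightarrow> real \<Rightarrow> real \<Rightarrow> (nat \<Rightarrow> real^'n) \<Rightarrow> bool" where
  "ntrot_seq A y k eps lam xs \<longleftrightarrow> (\<forall>p. ntrot_step A y k eps lam (xs p) (xs (Suc p)))"

end

(*
  By the push-through identity
  (A\<^sup>T A + \<epsilon> I)\<^sup>-\<^sup>1 A\<^sup>T = A\<^sup>T (A A\<^sup>T + \<epsilon> I)\<^sup>-\<^sup>1, the error u - x_S splits into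
  (I - A\<^sup>T A)(x - x_S), which the RIP bounds on supports of size 3k, the term
  A\<^sup>T (A A\<^sup>T + (\<epsilon> - \<lambda>) I)(A A\<^sup>T + \<epsilon> I)\<^sup>-\<^sup>1 A (x - x_S), which the extreme singular values
  bound, and a noise term.  For the thresholding step, the optimal relaxed weight w is
  compared with the indicator of S, and the defect A(x_S - x_S \<otimes> w) is controlled
  because w \<mapsto> \<parallel>A(g \<otimes> w)\<parallel> is convex, so it is dominated by its value at some vertex of
  the feasible polytope, i.e. at the indicator of a k-set.
*)
theory Submission
  imports Defs
begin

(* Keep transpose A *v x: the library would rewrite it to x v* A. *)
declare transpose_matrix_vector[simp del]

definition supp :: "real^'n \<Rightarrow> 'n set" where
  "supp z = {i. z $ i \<noteq> 0}"

lemma ksparse_iff_card_supp: "ksparse k z \<longleftrightarrow> card (supp z) \<le> k"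
  by (simp add: ksparse_def supp_def)

lemma ksparse_if_supp_subset: "supp z \<subseteq> X \<Longrightarrow> card X \<le> k \<Longrightarrow> ksparse k z"
  unfolding ksparse_iff_card_supp using card_mono[of X "supp z"] by simp

lemma supp_restr: "supp (restr \<Omega> z) \<subseteq> \<Omega>"
  by (auto simp: supp_def restr_def)

lemma supp_add: "supp (a + b) \<subseteq> supp a \<union> supp b"
  and supp_diff: "supp (a - b) \<subseteq> supp a \<union> supp b"
  and supp_scaleR: "supp (c *\<^sub>R a) \<subseteq> supp a"
  by (auto simp: supp_def)

lemma restr_nth [simp]: "restr \<Omega> z $ i = (if i \<in> \<Omega> then z $ i else 0)"
  by (simp add: restr_def)

lemma hadamard_nth [simp]: "hadamard u w $ i = u $ i * w $ i"
  by (simp add: hadamard_def)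

lemma restr_add: "restr \<Omega> (a + b) = restr \<Omega> a + restr \<Omega> b"
  and restr_diff: "restr \<Omega> (a - b) = restr \<Omega> a - restr \<Omega> b"
  by (simp_all add: vec_eq_iff)

lemma restr_eq_self_if_supp_subset: "supp z \<subseteq> \<Omega> \<Longrightarrow> restr \<Omega> z = z"
  by (auto simp: vec_eq_iff supp_def)

lemma restr_Compl_eq_0_iff: "restr (- \<Omega>) z = 0 \<longleftrightarrow> restr \<Omega> z = z"
  by (auto simp: vec_eq_iff)

lemma hadamard_add_left: "hadamard (a + b) w = hadamard a w + hadamard b w"
  by (simp add: vec_eq_iff algebra_simps)

lemma power2_norm_vec_eq_sum: "(norm (z::real^'n))\<^sup>2 = (\<Sum>i\<in>UNIV. (z $ i)\<^sup>2)"
  unfolding norm_vec_def L2_set_def by (simp add: sum_nonneg)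

lemma power2_norm_restr: "(norm (restr \<Omega> z))\<^sup>2 = (\<Sum>i\<in>\<Omega>. (z $ i)\<^sup>2)"
  unfolding power2_norm_vec_eq_sum by (simp add: if_distrib[of "\<lambda>t. t\<^sup>2"] sum.If_cases)

lemma norm_restr_mono:
  assumes "\<Omega> \<subseteq> \<Omega>'"
  shows "norm (restr \<Omega> z) \<le> norm (restr \<Omega>' z)"
proof (rule power2_le_imp_le)
  show "(norm (restr \<Omega> z))\<^sup>2 \<le> (norm (restr \<Omega>' z))\<^sup>2"
    unfolding power2_norm_restr using assms by (intro sum_mono2) auto
qed simp

lemma norm_restr_le: "norm (restr \<Omega> z) \<le> norm z"
proof -
  have "restr UNIV z = z" by (simp add: vec_eq_iff)
  then show ?thesis using norm_restr_mono[of \<Omega> UNIV z] by simp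
qed

lemma card_Un_supp_diff_le:
  assumes "ksparse k a" "supp b \<subseteq> S"
  shows "card (\<Omega> \<union> supp (a - b)) \<le> card (\<Omega> \<union> S) + k"
proof -
  have "card (\<Omega> \<union> supp (a - b)) \<le> card ((\<Omega> \<union> S) \<union> supp a)"
    using supp_diff[of a b] assms(2) by (intro card_mono) auto
  also have "\<dots> \<le> card (\<Omega> \<union> S) + card (supp a)"
    by (rule card_Un_le)
  finally show ?thesis using assms(1) unfolding ksparse_iff_card_supp by linarith
qed

section \<open>The restricted isometry constant\<close>

definition rip_admissible :: "real^'n^'m \<Rightarrow> nat \<Rightarrow> real \<Rightarrow> bool" where
  "rip_admissible A q \<delta> \<longleftrightarrow> \<delta> \<ge> 0 \<and> (\<forall>z. ksparse q z \<longrightarrow>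
      (1 - \<delta>) * (norm z)\<^sup>2 \<le> (norm (A *v z))\<^sup>2 \<and> (norm (A *v z))\<^sup>2 \<le> (1 + \<delta>) * (norm z)\<^sup>2)"

lemma rip_const_eq_Inf: "rip_const A q = Inf (Collect (rip_admissible A q))"
  unfolding rip_const_def rip_admissible_def[abs_def] ..

lemma rip_admissible_exists: "\<exists>\<delta>. rip_admissible (A::real^'n^'m) q \<delta>"
proof -
  obtain K where K: "\<And>z. norm (A *v z) \<le> norm z * K"
    using bounded_linear.bounded[OF matrix_vector_mul_bounded_linear] by blast
  have "(norm (A *v z))\<^sup>2 \<le> (1 + max 1 (K\<^sup>2)) * (norm z)\<^sup>2" for z
  proof -
    have "(norm (A *v z))\<^sup>2 \<le> K\<^sup>2 * (norm z)\<^sup>2"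
      using power_mono[OF K[of z] norm_ge_zero, of 2] by (simp add: power_mult_distrib mult.commute)
    also have "\<dots> \<le> (1 + max 1 (K\<^sup>2)) * (norm z)\<^sup>2" by (intro mult_right_mono) auto
    finally show ?thesis .
  qed
  moreover have "(1 - max 1 (K\<^sup>2)) * (norm z)\<^sup>2 \<le> (norm (A *v z))\<^sup>2" for z :: "real^'n"
    by (rule order_trans[of _ 0]) (simp_all add: mult_nonpos_nonneg)
  ultimately show ?thesis unfolding rip_admissible_def by (intro exI[of _ "max 1 (K\<^sup>2)"]) auto
qed

lemma rip_const_admissible: "rip_admissible A q (rip_const A q)"
proof -
  have "closed (Collect (rip_admissible A q))"
    unfolding rip_admissible_def
    by (intro closed_Collect_conj closed_Collect_all closed_Collect_imp closed_Collect_le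
        open_Collect_const continuous_intros continuous_on_const)
  moreover have "bdd_below (Collect (rip_admissible A q))"
    by (rule bdd_belowI[of _ 0]) (simp add: rip_admissible_def)
  moreover have "Collect (rip_admissible A q) \<noteq> {}"
    using rip_admissible_exists by blast
  ultimately show ?thesis
    unfolding rip_const_eq_Inf using closed_contains_Inf by (metis mem_Collect_eq)
qed

lemma rip_const_nonneg: "0 \<le> rip_const A q"
  using rip_const_admissible unfolding rip_admissible_def by blast

lemma rip_const_bounds:
  assumes "ksparse q z"
  shows "(1 - rip_const A q) * (norm z)\<^sup>2 \<le> (norm (A *v z))\<^sup>2"
    and "(norm (A *v z))\<^sup>2 \<le> (1 + rip_const A q) * (norm z)\<^sup>2"
  using rip_const_admissible assms unfolding rip_admissible_def by blast+

lemma rip_const_mono: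
  assumes "q \<le> q'"
  shows "rip_const A q \<le> rip_const A q'"
proof -
  have "rip_admissible A q (rip_const A q')"
    using rip_const_admissible assms unfolding rip_admissible_def ksparse_def by auto
  then show ?thesis unfolding rip_const_eq_Inf[of A q]
    by (intro cInf_lower) (simp_all add: bdd_below_def rip_admissible_def exI[of _ 0])
qed

lemma norm_mult_le_rip:
  assumes "ksparse q z"
  shows "norm (A *v z) \<le> sqrt (1 + rip_const A q) * norm z"
proof (rule power2_le_imp_le)
  have "(sqrt (1 + rip_const A q) * norm z)\<^sup>2 = (1 + rip_const A q) * (norm z)\<^sup>2"
    using rip_const_nonneg[of A q] by (simp add: power_mult_distrib)
  then show "(norm (A *v z))\<^sup>2 \<le> (sqrt (1 + rip_const A q) * norm z)\<^sup>2"
    using rip_const_bounds(2)[OF assms] by simp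
qed (simp add: rip_const_nonneg)

lemma rip_le_norm_mult:
  assumes "ksparse q z" "rip_const A q \<le> 1"
  shows "sqrt (1 - rip_const A q) * norm z \<le> norm (A *v z)"
proof (rule power2_le_imp_le)
  have "(sqrt (1 - rip_const A q) * norm z)\<^sup>2 = (1 - rip_const A q) * (norm z)\<^sup>2"
    using assms(2) by (simp add: power_mult_distrib)
  then show "(sqrt (1 - rip_const A q) * norm z)\<^sup>2 \<le> (norm (A *v z))\<^sup>2"
    using rip_const_bounds(1)[OF assms(1)] by simp
qed simp

lemma inner_transpose_mult: "(transpose A *v x) \<bullet> y = x \<bullet> ((A::real^'n^'m) *v y)"
  by (simp add: transpose_matrix_vector dot_lmul_matrix)

lemma rip_inner_le:
  fixes A :: "real^'n^'m"
  assumes "supp u \<subseteq> X" "supp v \<subseteq> X" "card X \<le> q"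
  shows "(A *v u) \<bullet> (A *v v) - u \<bullet> v \<le> rip_const A q * ((norm u)\<^sup>2 + (norm v)\<^sup>2) / 2"
proof -
  let ?d = "rip_const A q"
  have "ksparse q (u + v)" "ksparse q (u - v)"
    using supp_add[of u v] supp_diff[of u v] assms by (auto intro!: ksparse_if_supp_subset[of _ X])
  then have "(norm (A *v u + A *v v))\<^sup>2 \<le> (1 + ?d) * (norm (u + v))\<^sup>2"
    and "(1 - ?d) * (norm (u - v))\<^sup>2 \<le> (norm (A *v u - A *v v))\<^sup>2"
    using rip_const_bounds[of q "u + v" A] rip_const_bounds[of q "u - v" A]
    by (simp_all add: matrix_vector_right_distrib matrix_vector_mult_diff_distrib)
  then show ?thesis
    by (simp add: power2_norm_eq_inner inner_add_left inner_add_right inner_diff_left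
        inner_diff_right inner_commute algebra_simps)
qed

lemma rip_inner_bound:
  fixes A :: "real^'n^'m"
  assumes "supp u \<subseteq> X" "supp v \<subseteq> X" "card X \<le> q"
  shows "\<bar>(A *v u) \<bullet> (A *v v) - u \<bullet> v\<bar> \<le> rip_const A q * norm u * norm v"
proof (cases "u = 0 \<or> v = 0")
  case False
  define u' where "u' = (1 / norm u) *\<^sub>R u"
  define v' where "v' = (1 / norm v) *\<^sub>R v"
  have "supp u' \<subseteq> X" "supp (- u') \<subseteq> X" "supp v' \<subseteq> X"
    using assms supp_scaleR[of _ u] supp_scaleR[of _ v] unfolding u'_def v'_def supp_def by auto
  note upper = rip_inner_le[OF this(1,3) assms(3), of A]
    and lower = rip_inner_le[OF this(2,3) assms(3), of A]
  have "A *v (- u') = - (A *v u')"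
    using matrix_vector_mult_scaleR[of A "-1" u'] by simp
  moreover have "norm u' = 1" "norm v' = 1"
    using False by (simp_all add: u'_def v'_def)
  ultimately have "\<bar>(A *v u') \<bullet> (A *v v') - u' \<bullet> v'\<bar> \<le> rip_const A q"
    using upper lower by (simp add: abs_le_iff)
  moreover have "(A *v u) \<bullet> (A *v v) - u \<bullet> v
      = norm u * norm v * ((A *v u') \<bullet> (A *v v') - u' \<bullet> v')"
    using False by (simp add: u'_def v'_def matrix_vector_mult_scaleR field_simps)
  ultimately show ?thesis
    using mult_left_mono[of "\<bar>(A *v u') \<bullet> (A *v v') - u' \<bullet> v'\<bar>" "rip_const A q" "norm u * norm v"]
    by (simp add: abs_mult mult_ac)
qed auto

lemma norm_restr_gram_residual:
  fixes A :: "real^'n^'m"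
  assumes "card (\<Omega> \<union> supp z) \<le> q"
  shows "norm (restr \<Omega> (z - transpose A *v (A *v z))) \<le> rip_const A q * norm z"
proof -
  define g where "g = restr \<Omega> (z - transpose A *v (A *v z))"
  have "(norm g)\<^sup>2 = g \<bullet> (z - transpose A *v (A *v z))"
    unfolding g_def power2_norm_eq_inner inner_vec_def
    by (rule sum.cong) (auto simp: power2_eq_square)
  also have "\<dots> = g \<bullet> z - (A *v g) \<bullet> (A *v z)"
    using inner_transpose_mult[of A "A *v z" g] by (simp only: inner_diff_right inner_commute)
  also have "\<dots> \<le> rip_const A q * norm g * norm z"
    using rip_inner_bound[of g "\<Omega> \<union> supp z" z q A] assms supp_restr[of \<Omega>]
    unfolding g_def by (auto simp: abs_le_iff)
  finally have "norm g * norm g \<le> norm g * (rip_const A q * norm z)"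
    by (simp only: power2_eq_square mult.commute mult.left_commute)
  then have "norm g \<le> rip_const A q * norm z"
  proof (cases "norm g = 0")
    case True
    then show ?thesis using rip_const_nonneg[of A q] by simp
  next
    case False
    then have "0 < norm g" by simp
    with \<open>norm g * norm g \<le> _\<close> show ?thesis by (rule mult_left_le_imp_le)
  qed
  then show ?thesis unfolding g_def .
qed

section \<open>Extremal eigenvalues of symmetric matrices\<close>

lemma inner_symmetric_matrix:
  fixes M :: "real^'m^'m"
  assumes "transpose M = M"
  shows "x \<bullet> (M *v y) = (M *v x) \<bullet> y"
  using inner_transpose_mult[of M x y] assms by simp

lemma bilinear_psd_cauchy_schwarz:
  fixes B :: "'a::real_vector \<Rightarrow> 'a \<Rightarrow> real"
  assumes bil: "bilinear B" and sym: "\<And>x y. B x y = B y x" and psd: "\<And>x. 0 \<le> B x x"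
  shows "(B x y)\<^sup>2 \<le> B x x * B y y"
proof -
  have expand: "B (x + t *\<^sub>R y) (x + t *\<^sub>R y) = B x x + 2 * t * B x y + t\<^sup>2 * B y y" for t
    using sym[of y x] by (simp add: bilinear_ladd[OF bil] bilinear_radd[OF bil]
        bilinear_lmul[OF bil] bilinear_rmul[OF bil] power2_eq_square algebra_simps)
  have nonneg: "0 \<le> B x x + 2 * t * B x y + t\<^sup>2 * B y y" for t
    using psd expand by metis
  show ?thesis
  proof (cases "B y y = 0")
    case True
    have "B x y = 0"
    proof (rule ccontr)
      assume "B x y \<noteq> 0"
      then have "B x x + 2 * (- (B x x + 1) / (2 * B x y)) * B x y = -1"
        by (simp add: field_simps)
      with nonneg[of "- (B x x + 1) / (2 * B x y)"] True show False by simp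
    qed
    then show ?thesis using True by simp
  next
    case False
    then have pos: "B y y > 0" using psd[of y] by simp
    have "B x x + 2 * (- B x y / B y y) * B x y + (- B x y / B y y)\<^sup>2 * B y y
        = B x x - (B x y)\<^sup>2 / B y y"
      using pos by (simp add: field_simps power2_eq_square)
    with nonneg[of "- B x y / B y y"] have "(B x y)\<^sup>2 / B y y \<le> B x x" by simp
    then show ?thesis using pos by (simp add: pos_divide_le_eq mult.commute)
  qed
qed

lemma eigenvector_if_quadratic_form_le:
  fixes M :: "real^'m^'m"
  assumes sym: "transpose M = M"
    and le: "\<And>q. q \<bullet> (M *v q) \<le> \<mu> * (norm q)\<^sup>2"
    and eq: "q0 \<bullet> (M *v q0) = \<mu> * (norm q0)\<^sup>2"
  shows "M *v q0 = \<mu> *\<^sub>R q0"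
proof -
  define B where "B x y = \<mu> * (x \<bullet> y) - x \<bullet> (M *v y)" for x y :: "real^'m"
  have bil: "bilinear B"
    unfolding bilinear_def linear_iff B_def
    by (simp add: inner_add_left inner_add_right matrix_vector_right_distrib
        matrix_vector_mult_scaleR algebra_simps)
  have B_sym: "B x y = B y x" for x y
    unfolding B_def using inner_symmetric_matrix[OF sym, of x y] by (simp add: inner_commute)
  have B_psd: "0 \<le> B x x" for x
    using le[of x] by (simp add: B_def power2_norm_eq_inner)
  \<comment> \<open>B is positive semidefinite and vanishes at q0, so q0 lies in its radical.\<close>
  define r where "r = \<mu> *\<^sub>R q0 - M *v q0"
  have "(B r q0)\<^sup>2 \<le> B r r * B q0 q0"
    by (rule bilinear_psd_cauchy_schwarz[OF bil B_sym B_psd])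
  moreover have "B q0 q0 = 0"
    using eq by (simp add: B_def power2_norm_eq_inner)
  ultimately have "B r q0 = 0" by simp
  then have "r \<bullet> r = 0" by (simp add: B_def r_def inner_diff_right)
  then show ?thesis by (simp add: r_def)
qed

lemma quadratic_form_scaleR:
  "(c *\<^sub>R q) \<bullet> ((M::real^'m^'m) *v (c *\<^sub>R q)) = c\<^sup>2 * (q \<bullet> (M *v q))"
  by (simp add: matrix_vector_mult_scaleR power2_eq_square)

lemma quadratic_form_le_if_le_on_sphere:
  fixes M :: "real^'m^'m"
  assumes "\<And>q. norm q = 1 \<Longrightarrow> q \<bullet> (M *v q) \<le> \<mu>"
  shows "q \<bullet> (M *v q) \<le> \<mu> * (norm q)\<^sup>2"
proof (cases "q = 0")
  case False
  have "q = norm q *\<^sub>R ((1 / norm q) *\<^sub>R q)" using False by simp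
  then have "q \<bullet> (M *v q) = (norm q)\<^sup>2 * (((1 / norm q) *\<^sub>R q) \<bullet> (M *v ((1 / norm q) *\<^sub>R q)))"
    by (metis quadratic_form_scaleR)
  also have "\<dots> \<le> (norm q)\<^sup>2 * \<mu>"
    using False by (intro mult_left_mono assms) simp_all
  finally show ?thesis by (simp add: mult.commute)
qed simp

lemma symmetric_matrix_max_eigenvalue:
  fixes M :: "real^'m^'m"
  assumes sym: "transpose M = M"
  shows "\<exists>\<mu>\<in>mat_eigenvalues M. \<forall>q. q \<bullet> (M *v q) \<le> \<mu> * (norm q)\<^sup>2"
proof -
  have "continuous_on (sphere 0 1) (\<lambda>q. q \<bullet> (M *v q))"
    by (intro continuous_intros linear_continuous_on matrix_vector_mul_bounded_linear)
  moreover have "sphere (0::real^'m) 1 \<noteq> {}" by simp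
  ultimately obtain q0 where q0: "q0 \<in> sphere 0 1"
    "\<And>q. q \<in> sphere 0 1 \<Longrightarrow> q \<bullet> (M *v q) \<le> q0 \<bullet> (M *v q0)"
    using continuous_attains_sup[OF compact_sphere] by blast
  let ?\<mu> = "q0 \<bullet> (M *v q0)"
  have le: "q \<bullet> (M *v q) \<le> ?\<mu> * (norm q)\<^sup>2" for q
    using q0(2) by (intro quadratic_form_le_if_le_on_sphere) simp
  have "M *v q0 = ?\<mu> *\<^sub>R q0"
    using q0(1) by (intro eigenvector_if_quadratic_form_le[OF sym le]) simp
  moreover have "q0 \<noteq> 0" using q0(1) by auto
  ultimately show ?thesis
    unfolding mat_eigenvalues_def using le by blast
qed

lemma symmetric_matrix_min_eigenvalue:
  fixes M :: "real^'m^'m"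
  assumes sym: "transpose M = M"
  shows "\<exists>\<mu>\<in>mat_eigenvalues M. \<forall>q. \<mu> * (norm q)\<^sup>2 \<le> q \<bullet> (M *v q)"
proof -
  have neg: "(- M) *v v = - (M *v v)" for v
    by (simp add: vec_eq_iff matrix_vector_mult_def sum_negf)
  have "transpose (- M) = - M"
    using transpose_scalar[of "-1" M] sym by simp
  then obtain \<mu> where "\<mu> \<in> mat_eigenvalues (- M)"
    and le: "\<And>q. q \<bullet> ((- M) *v q) \<le> \<mu> * (norm q)\<^sup>2"
    using symmetric_matrix_max_eigenvalue by blast
  then obtain v where v: "v \<noteq> 0" "- (M *v v) = \<mu> *\<^sub>R v"
    unfolding mat_eigenvalues_def neg by blast
  then have "M *v v = (- \<mu>) *\<^sub>R v" by (simp add: v(2)[symmetric])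
  then have "- \<mu> \<in> mat_eigenvalues M"
    unfolding mat_eigenvalues_def using v(1) by blast
  moreover have "(- \<mu>) * (norm q)\<^sup>2 \<le> q \<bullet> (M *v q)" for q
    using le[of q] by (simp add: neg)
  ultimately show ?thesis by blast
qed

lemma symmetric_matrix_finite_eigenvalues:
  fixes M :: "real^'m^'m"
  assumes sym: "transpose M = M"
  shows "finite (mat_eigenvalues M)"
proof -
  let ?E = "mat_eigenvalues M"
  define v where "v \<mu> = (SOME v. v \<noteq> 0 \<and> M *v v = \<mu> *\<^sub>R v)" for \<mu>
  have v: "v \<mu> \<noteq> 0 \<and> M *v v \<mu> = \<mu> *\<^sub>R v \<mu>" if "\<mu> \<in> ?E" for \<mu>
  proof -
    have "\<exists>v. v \<noteq> 0 \<and> M *v v = \<mu> *\<^sub>R v" using that by (simp add: mat_eigenvalues_def)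
    then show ?thesis unfolding v_def by (rule someI_ex)
  qed
  have inj: "inj_on v ?E"
    by (rule inj_onI) (metis v scaleR_cancel_right)
  have "pairwise orthogonal (v ` ?E)"
  proof (clarsimp simp: pairwise_def)
    fix \<mu> \<nu> assume \<mu>: "\<mu> \<in> ?E" and \<nu>: "\<nu> \<in> ?E" and ne: "v \<mu> \<noteq> v \<nu>"
    have "\<nu> * (v \<mu> \<bullet> v \<nu>) = \<mu> * (v \<mu> \<bullet> v \<nu>)"
      using inner_symmetric_matrix[OF sym, of "v \<mu>" "v \<nu>"] v[OF \<mu>] v[OF \<nu>] by simp
    moreover have "\<mu> \<noteq> \<nu>" using ne by auto
    ultimately show "orthogonal (v \<mu>) (v \<nu>)" by (simp add: orthogonal_def)
  qed
  moreover have "0 \<notin> v ` ?E" using v by auto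
  ultimately have "finite (v ` ?E)"
    using pairwise_orthogonal_independent finiteI_independent by blast
  then show ?thesis using inj finite_imageD by blast
qed

section \<open>Extreme singular values\<close>

lemma gram_symmetric: "transpose (A ** transpose A) = (A::real^'n^'m) ** transpose A"
  by (simp add: matrix_transpose_mul)

lemma gram_quadratic_form:
  "q \<bullet> (((A::real^'n^'m) ** transpose A) *v q) = (norm (transpose A *v q))\<^sup>2"
  using inner_transpose_mult[of A q "transpose A *v q"]
  by (simp add: power2_norm_eq_inner flip: matrix_vector_mul_assoc)

lemma gram_eigenvalue_nonneg:
  assumes "\<mu> \<in> mat_eigenvalues (A ** transpose A)"
  shows "0 \<le> \<mu>"
proof -
  obtain v where "v \<noteq> 0" "(A ** transpose A) *v v = \<mu> *\<^sub>R v"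
    using assms unfolding mat_eigenvalues_def by blast
  then have "\<mu> * (v \<bullet> v) = (norm (transpose A *v v))\<^sup>2" and "v \<bullet> v > 0"
    using gram_quadratic_form[of v A] by simp_all
  then show ?thesis by (metis zero_le_power2 zero_le_mult_iff not_le)
qed

lemma gram_eigenvalues_extremal:
  fixes A :: "real^'n^'m"
  defines "E \<equiv> mat_eigenvalues (A ** transpose A)"
  shows "finite E" and "E \<noteq> {}" and "0 \<le> Min E" and "(sigma_max A)\<^sup>2 = Max E" and "(sigma_min A)\<^sup>2 = Min E"
    and "\<And>q. (norm (transpose A *v q))\<^sup>2 \<le> Max E * (norm q)\<^sup>2"
    and "\<And>q. Min E * (norm q)\<^sup>2 \<le> (norm (transpose A *v q))\<^sup>2"
proof -
  show fin: "finite E"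
    unfolding E_def by (rule symmetric_matrix_finite_eigenvalues[OF gram_symmetric])
  obtain \<mu>1 where \<mu>1: "\<mu>1 \<in> E" "\<And>q. (norm (transpose A *v q))\<^sup>2 \<le> \<mu>1 * (norm q)\<^sup>2"
    using symmetric_matrix_max_eigenvalue[OF gram_symmetric, of A]
    unfolding E_def gram_quadratic_form by blast
  obtain \<mu>2 where \<mu>2: "\<mu>2 \<in> E" "\<And>q. \<mu>2 * (norm q)\<^sup>2 \<le> (norm (transpose A *v q))\<^sup>2"
    using symmetric_matrix_min_eigenvalue[OF gram_symmetric, of A]
    unfolding E_def gram_quadratic_form by blast
  show ne: "E \<noteq> {}" using \<mu>1 by blast
  show "0 \<le> Min E"
    using gram_eigenvalue_nonneg Min_in[OF fin ne] unfolding E_def by blast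
  moreover have "0 \<le> Max E"
    using gram_eigenvalue_nonneg Max_in[OF fin ne] unfolding E_def by blast
  ultimately show "(sigma_max A)\<^sup>2 = Max E" "(sigma_min A)\<^sup>2 = Min E"
    unfolding sigma_max_def sigma_min_def E_def by simp_all
  show "(norm (transpose A *v q))\<^sup>2 \<le> Max E * (norm q)\<^sup>2" for q
    using \<mu>1(2)[of q] mult_right_mono[OF Max_ge[OF fin \<mu>1(1)], of "(norm q)\<^sup>2"] by simp
  show "Min E * (norm q)\<^sup>2 \<le> (norm (transpose A *v q))\<^sup>2" for q
    using \<mu>2(2)[of q] mult_right_mono[OF Min_le[OF fin \<mu>2(1)], of "(norm q)\<^sup>2"] by simp
qed

lemma sigma_min_le_sigma_max: "sigma_min A \<le> sigma_max A"
  using gram_eigenvalues_extremal(1,2)[of A] unfolding sigma_min_def sigma_max_def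
  by (simp add: Max_ge Min_in)

lemma sigma_min_nonneg: "0 \<le> sigma_min A"
  using gram_eigenvalues_extremal(3)[of A] by (simp add: sigma_min_def)

lemma sigma_max_nonneg: "0 \<le> sigma_max A"
  using sigma_min_nonneg sigma_min_le_sigma_max by (rule order_trans)

lemma norm_transpose_mult_le: "norm (transpose A *v q) \<le> sigma_max A * norm q"
proof (rule power2_le_imp_le)
  show "(norm (transpose A *v q))\<^sup>2 \<le> (sigma_max A * norm q)\<^sup>2"
    using gram_eigenvalues_extremal(6)[of A q]
    unfolding power_mult_distrib gram_eigenvalues_extremal(4) .
qed (simp add: sigma_max_nonneg)

lemma sigma_min_le_norm_transpose_mult: "sigma_min A * norm q \<le> norm (transpose A *v q)"
proof (rule power2_le_imp_le)
  show "(sigma_min A * norm q)\<^sup>2 \<le> (norm (transpose A *v q))\<^sup>2"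
    using gram_eigenvalues_extremal(7)[of A q]
    unfolding power_mult_distrib gram_eigenvalues_extremal(5) .
qed simp

lemma norm_mult_le_sigma_max: "norm ((A::real^'n^'m) *v w) \<le> sigma_max A * norm w"
proof -
  have "norm (A *v w) * norm (A *v w) = (transpose A *v (A *v w)) \<bullet> w"
    by (simp add: inner_transpose_mult power2_norm_eq_inner flip: power2_eq_square)
  also have "\<dots> \<le> norm (transpose A *v (A *v w)) * norm w"
    by (rule norm_cauchy_schwarz)
  also have "\<dots> \<le> norm (A *v w) * (sigma_max A * norm w)"
    using mult_right_mono[OF norm_transpose_mult_le[of A "A *v w"] norm_ge_zero[of w]]
    by (simp add: mult_ac)
  finally have "norm (A *v w) * norm (A *v w) \<le> norm (A *v w) * (sigma_max A * norm w)" .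
  then show ?thesis
  proof (cases "A *v w = 0")
    case False
    then have "0 < norm (A *v w)" by simp
    with \<open>norm (A *v w) * _ \<le> _\<close> show ?thesis by (rule mult_left_le_imp_le)
  qed (simp add: sigma_max_nonneg)
qed

lemma one_minus_rip_le_sigma_max_sq:
  fixes A :: "real^'n^'m"
  assumes "k \<ge> 1"
  shows "1 - rip_const A k \<le> (sigma_max A)\<^sup>2"
proof -
  fix i :: 'n
  have "ksparse k (axis i (1::real))"
    using assms by (intro ksparse_if_supp_subset[of _ "{i}"]) (auto simp: supp_def axis_def)
  then have "(1 - rip_const A k) * 1 \<le> (norm (A *v axis i 1))\<^sup>2"
    using rip_const_bounds(1)[of k "axis i 1" A] by simp
  also have "\<dots> \<le> (sigma_max A * 1)\<^sup>2"
    using norm_mult_le_sigma_max[of A "axis i 1"] by (intro power_mono) auto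
  finally show ?thesis by simp
qed

section \<open>The shifted Gram operator\<close>

definition gram_shift :: "real^'n^'m \<Rightarrow> real \<Rightarrow> real^'m \<Rightarrow> real^'m" where
  "gram_shift A t q = A *v (transpose A *v q) + t *\<^sub>R q"

lemma linear_gram_shift: "linear (gram_shift A t)"
  by (rule linearI) (simp_all add: gram_shift_def matrix_vector_right_distrib
      matrix_vector_mult_scaleR algebra_simps)

lemma inner_gram_shift:
  "gram_shift A s x \<bullet> gram_shift A t y
     = (A *v (transpose A *v x)) \<bullet> (A *v (transpose A *v y))
       + (s + t) * ((transpose A *v x) \<bullet> (transpose A *v y)) + s * t * (x \<bullet> y)"
proof -
  have "(A *v (transpose A *v x)) \<bullet> y = (transpose A *v x) \<bullet> (transpose A *v y)"
    and "x \<bullet> (A *v (transpose A *v y)) = (transpose A *v x) \<bullet> (transpose A *v y)"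
    using inner_transpose_mult[of A x "transpose A *v y"]
      inner_transpose_mult[of A y "transpose A *v x"] by (simp_all add: inner_commute)
  then show ?thesis
    by (simp add: gram_shift_def inner_add_left inner_add_right algebra_simps)
qed

lemma inner_gram_shift_commute: "gram_shift A s x \<bullet> gram_shift A t y = gram_shift A s y \<bullet> gram_shift A t x"
  unfolding inner_gram_shift by (simp add: inner_commute)

lemma power2_norm_gram_shift:
  "(norm (gram_shift A t q))\<^sup>2
     = (norm (A *v (transpose A *v q)))\<^sup>2 + 2 * t * (norm (transpose A *v q))\<^sup>2 + t\<^sup>2 * (norm q)\<^sup>2"
  using inner_gram_shift[of A t q t q] unfolding power2_norm_eq_inner by (simp add: power2_eq_square)

lemma inner_gram_shift_self: "q \<bullet> gram_shift A t q = (norm (transpose A *v q))\<^sup>2 + t * (norm q)\<^sup>2"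
  using inner_gram_shift[of A 1 q 0 q]
  by (simp add: gram_shift_def inner_add_right power2_norm_eq_inner inner_transpose_mult[symmetric])

(* With a = \<parallel>q\<parallel>\<^sup>2, b = \<parallel>A\<^sup>T q\<parallel>\<^sup>2 = q \<bullet> A A\<^sup>T q and c = \<parallel>A A\<^sup>T q\<parallel>\<^sup>2 the moments of order 0, 1, 2
  of the spectral measure of A A\<^sup>T at q, the operator estimates below only use these
  inequalities between them. *)

lemma gram_moments:
  fixes A :: "real^'n^'m" and q :: "real^'m"
  defines "a \<equiv> (norm q)\<^sup>2" and "b \<equiv> (norm (transpose A *v q))\<^sup>2"
    and "c \<equiv> (norm (A *v (transpose A *v q)))\<^sup>2"
  shows "b\<^sup>2 \<le> a * c" and "(sigma_min A)\<^sup>2 * a \<le> b" and "b \<le> (sigma_max A)\<^sup>2 * a"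
    and "c \<le> (sigma_max A)\<^sup>2 * b" and "(sigma_min A)\<^sup>2 * b \<le> c"
proof -
  have "b \<le> norm q * norm (A *v (transpose A *v q))"
    using norm_cauchy_schwarz[of q "A *v (transpose A *v q)"]
    unfolding b_def power2_norm_eq_inner inner_transpose_mult[symmetric] by (simp add: inner_commute)
  then have "b\<^sup>2 \<le> (norm q * norm (A *v (transpose A *v q)))\<^sup>2"
    by (rule power_mono) (simp add: b_def)
  then show bac: "b\<^sup>2 \<le> a * c"
    unfolding a_def c_def by (simp only: power_mult_distrib)
  show lower: "(sigma_min A)\<^sup>2 * a \<le> b" and upper: "b \<le> (sigma_max A)\<^sup>2 * a"
    unfolding a_def b_def power_mult_distrib[symmetric]
    by (intro power_mono norm_transpose_mult_le sigma_min_le_norm_transpose_mult mult_nonneg_nonneg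
        sigma_min_nonneg norm_ge_zero)+
  show "c \<le> (sigma_max A)\<^sup>2 * b"
    unfolding b_def c_def power_mult_distrib[symmetric]
    by (intro power_mono norm_mult_le_sigma_max norm_ge_zero)
  show "(sigma_min A)\<^sup>2 * b \<le> c"
  proof (cases "a = 0")
    case True
    then show ?thesis using upper by (simp add: b_def c_def)
  next
    case False
    then have "0 < a" by (simp add: a_def)
    moreover have "a * ((sigma_min A)\<^sup>2 * b) \<le> a * c"
      using bac mult_right_mono[OF lower, of b] by (simp add: b_def power2_eq_square mult_ac)
    ultimately show ?thesis by (rule mult_left_le_imp_le[rotated])
  qed
qed

lemma gram_shift_surj:
  fixes A :: "real^'n^'m"
  assumes "t > 0"
  shows "\<exists>q. gram_shift A t q = r"
proof -
  have "inj (gram_shift A t)"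
    unfolding linear_injective_0[OF linear_gram_shift]
  proof (intro allI impI)
    fix q assume "gram_shift A t q = 0"
    then have "(norm (transpose A *v q))\<^sup>2 + t * (norm q)\<^sup>2 = 0"
      using inner_gram_shift_self[of q A t] by simp
    then have "t * (norm q)\<^sup>2 \<le> 0"
      using zero_le_power2[of "norm (transpose A *v q)"] by linarith
    then show "q = 0"
      using assms by (simp add: mult_le_0_iff)
  qed
  then show ?thesis
    using linear_injective_imp_surjective[OF linear_gram_shift] by (metis surjD)
qed

lemma gram_plus_scalar_mult:
  "(transpose B ** B + e *\<^sub>R mat 1) *v v = transpose B *v ((B::real^'n^'m) *v v) + e *\<^sub>R v"
  by (simp add: matrix_vector_mult_add_rdistrib matrix_vector_mul_assoc
      flip: scaleR_matrix_vector_assoc)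

lemma invertible_gram_plus_scalar:
  fixes B :: "real^'n^'m"
  assumes "e > 0"
  shows "invertible (transpose B ** B + e *\<^sub>R mat 1)"
proof -
  let ?G = "transpose B ** B + e *\<^sub>R mat 1"
  have "inj ((*v) ?G)"
    unfolding linear_injective_0[OF matrix_vector_mul_linear]
  proof (intro allI impI)
    fix v assume "?G *v v = 0"
    then have "v \<bullet> (transpose B *v (B *v v) + e *\<^sub>R v) = 0"
      by (simp add: gram_plus_scalar_mult)
    then have "(norm (B *v v))\<^sup>2 + e * (norm v)\<^sup>2 = 0"
      using inner_transpose_mult[of B "B *v v" v]
      by (simp add: inner_add_right power2_norm_eq_inner inner_commute)
    then have "e * (norm v)\<^sup>2 \<le> 0"
      using zero_le_power2[of "norm (B *v v)"] by linarith
    then show "v = 0"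
      using assms by (simp add: mult_le_0_iff)
  qed
  then show ?thesis
    by (simp add: matrix_left_invertible_injective invertible_left_inverse)
qed

lemma matrix_inv_mult_left:
  assumes "invertible M"
  shows "matrix_inv M ** M = mat 1"
  using assms unfolding invertible_def matrix_inv_def by (metis (mono_tags, lifting) someI_ex)

lemma regularized_inverse_push_through:
  fixes A :: "real^'n^'m"
  assumes "e > 0"
  shows "matrix_inv (transpose A ** A + e *\<^sub>R mat 1) *v (transpose A *v gram_shift A e q)
    = transpose A *v q"
proof -
  let ?G = "transpose A ** A + e *\<^sub>R mat 1"
  have "transpose A *v gram_shift A e q = ?G *v (transpose A *v q)"
    by (simp add: gram_shift_def gram_plus_scalar_mult matrix_vector_right_distrib
        matrix_vector_mult_scaleR)
  then have "matrix_inv ?G *v (transpose A *v gram_shift A e q)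
      = (matrix_inv ?G ** ?G) *v (transpose A *v q)"
    by (simp only: matrix_vector_mul_assoc matrix_mul_assoc)
  then show ?thesis
    by (simp add: matrix_inv_mult_left[OF invertible_gram_plus_scalar[OF assms]])
qed

lemma shifted_moments_nonneg:
  fixes a b c e l m :: real
  assumes "0 \<le> a" "0 \<le> b" "m * b \<le> c" "m * a \<le> b" "0 < e" "l \<le> e + m"
  shows "0 \<le> c + (2 * e - l) * b + e * (e - l) * a"
proof -
  have "(e - m) * b \<le> (2 * e - l) * b"
    using assms by (intro mult_right_mono) auto
  moreover have "e * (- m) * a \<le> e * (e - l) * a"
    using assms by (intro mult_right_mono mult_left_mono) auto
  moreover have "e * (m * a) \<le> e * b"
    using assms by (intro mult_left_mono) auto
  ultimately show ?thesis
    using assms(3) by (simp add: algebra_simps)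
qed

lemma shifted_moments_le:
  fixes a b c e l s :: real
  assumes "0 \<le> a" "c \<le> s * b" "b \<le> s * a" "0 \<le> e" "0 \<le> l"
  shows "(s + e) * (c + (2 * e - l) * b + e * (e - l) * a) \<le> (s + e - l) * (c + 2 * e * b + e\<^sup>2 * a)"
proof -
  have "(s + e - l) * (c + 2 * e * b + e\<^sup>2 * a) - (s + e) * (c + (2 * e - l) * b + e * (e - l) * a)
      = l * ((s * b - c) + e * (s * a - b))"
    by (simp add: algebra_simps power2_eq_square)
  moreover have "0 \<le> l * ((s * b - c) + e * (s * a - b))"
    using assms by simp
  ultimately show ?thesis by linarith
qed

lemma noise_moments_le:
  fixes a b c e s :: real
  assumes "0 \<le> a" "0 \<le> b" "0 \<le> c" "b \<le> s * a" "b\<^sup>2 \<le> a * c" "0 \<le> s" "s \<le> e"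
  shows "b * (e + s)\<^sup>2 \<le> s * (c + 2 * e * b + e\<^sup>2 * a)"
proof -
  have "s * (s * b - c) \<le> e\<^sup>2 * (s * a - b)"
  proof (cases "a = 0")
    case True
    then show ?thesis using assms by simp
  next
    case False
    then have "0 < a" using assms(1) by simp
    moreover have "a * (s * (s * b - c)) \<le> a * (e\<^sup>2 * (s * a - b))"
    proof -
      have "s * b\<^sup>2 \<le> s * (a * c)"
        using assms(5,6) by (rule mult_left_mono)
      then have "a * (s * (s * b - c)) \<le> s * (s * a * b - b\<^sup>2)"
        by (simp add: algebra_simps)
      also have "\<dots> = (s * b) * (s * a - b)" by (simp add: algebra_simps power2_eq_square)
      also have "\<dots> \<le> (s * (s * a)) * (s * a - b)"
        using assms by (intro mult_right_mono mult_left_mono) auto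
      also have "\<dots> = (s * s) * (a * (s * a - b))" by (simp add: algebra_simps)
      also have "\<dots> \<le> e\<^sup>2 * (a * (s * a - b))"
        using assms mult_mono[of s e s e] by (intro mult_right_mono) (auto simp: power2_eq_square)
      finally show ?thesis by (simp add: algebra_simps)
    qed
    ultimately show ?thesis by (rule mult_left_le_imp_le[rotated])
  qed
  moreover have "b * (e + s)\<^sup>2 - s * (c + 2 * e * b + e\<^sup>2 * a) = s * (s * b - c) - e\<^sup>2 * (s * a - b)"
    by (simp add: algebra_simps power2_eq_square)
  ultimately show ?thesis by linarith
qed

lemma gram_shift_ratio_nonneg:
  fixes A :: "real^'n^'m"
  assumes "e > 0" and "l \<le> e + (sigma_min A)\<^sup>2"
  shows "0 \<le> ((sigma_max A)\<^sup>2 + e - l) / ((sigma_max A)\<^sup>2 + e)"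
  using assms power_mono[OF sigma_min_le_sigma_max sigma_min_nonneg, of A 2]
  by (intro divide_nonneg_pos add_nonneg_pos) auto

(* Spectrally this says \<bar>c + e - l\<bar> \<le> h (c + e) for every eigenvalue c of A A\<^sup>T.
  Without a spectral theorem we apply Cauchy-Schwarz to the positive semidefinite form
  F x y = P x \<bullet> Q y of the commuting operators P = A A\<^sup>T + e and Q = A A\<^sup>T + e - l,
  at q and the r with P r = Q q. *)

lemma norm_gram_shift_le:
  fixes A :: "real^'n^'m"
  assumes e: "e > 0" and l: "l > 0" and lm: "l \<le> e + (sigma_min A)\<^sup>2"
  defines "h \<equiv> ((sigma_max A)\<^sup>2 + e - l) / ((sigma_max A)\<^sup>2 + e)"
  shows "norm (gram_shift A (e - l) q) \<le> h * norm (gram_shift A e q)"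
proof -
  let ?s = "(sigma_max A)\<^sup>2"
  let ?P = "gram_shift A e" and ?Q = "gram_shift A (e - l)"
  define F where "F x y = ?P x \<bullet> ?Q y" for x y
  have den: "?s + e > 0" using e by (simp add: add_nonneg_pos)
  have h0: "0 \<le> h" unfolding h_def using e lm by (rule gram_shift_ratio_nonneg)
  have F_diag: "F x x = (norm (A *v (transpose A *v x)))\<^sup>2 + (2 * e - l) * (norm (transpose A *v x))\<^sup>2
      + e * (e - l) * (norm x)\<^sup>2" for x
    unfolding F_def inner_gram_shift power2_norm_eq_inner by simp
  have F_bil: "bilinear F"
    unfolding F_def bilinear_conv_bounded_bilinear
    by (intro bounded_bilinear.comp[OF bounded_bilinear_inner]
        linear_conv_bounded_linear[THEN iffD1] linear_gram_shift)
  have F_sym: "F x y = F y x" for x y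
    unfolding F_def by (rule inner_gram_shift_commute)
  have F_psd: "0 \<le> F x x" for x
    unfolding F_diag using gram_moments[of A x] e lm
    by (intro shifted_moments_nonneg) auto
  have F_le: "F x x \<le> h * (norm (?P x))\<^sup>2" for x
  proof -
    have "(?s + e) * F x x \<le> (?s + e - l) * (norm (?P x))\<^sup>2"
      unfolding F_diag power2_norm_gram_shift using gram_moments[of A x] e l
      by (intro shifted_moments_le) auto
    then show ?thesis using den by (simp add: h_def field_simps)
  qed
  obtain r where r: "?P r = ?Q q" using gram_shift_surj[OF e] by blast
  have F_qr: "F q r = (norm (?Q q))\<^sup>2"
    unfolding F_def inner_gram_shift_commute[of A e q] r by (simp add: power2_norm_eq_inner)
  have "(norm (?Q q))\<^sup>2 * (norm (?Q q))\<^sup>2 \<le> F q q * F r r"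
    using bilinear_psd_cauchy_schwarz[OF F_bil F_sym F_psd, of q r]
    by (simp add: F_qr power2_eq_square)
  also have "\<dots> \<le> (h * (norm (?P q))\<^sup>2) * (h * (norm (?Q q))\<^sup>2)"
    using F_le[of q] F_le[of r] F_psd[of q] F_psd[of r] unfolding r
    by (intro mult_mono) auto
  also have "\<dots> = (norm (?Q q))\<^sup>2 * (h * norm (?P q))\<^sup>2"
    by (simp add: power_mult_distrib power2_eq_square mult.commute mult.left_commute)
  finally have cancel: "(norm (?Q q))\<^sup>2 * (norm (?Q q))\<^sup>2 \<le> (norm (?Q q))\<^sup>2 * (h * norm (?P q))\<^sup>2" .
  have "(norm (?Q q))\<^sup>2 \<le> (h * norm (?P q))\<^sup>2"
  proof (cases "?Q q = 0")
    case False
    then have "0 < (norm (?Q q))\<^sup>2" by simp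
    with cancel show ?thesis by (rule mult_left_le_imp_le)
  qed simp
  then show ?thesis
    by (rule power2_le_imp_le) (simp add: h0)
qed

(* Spectrally: \<surd>c / (c + e) \<le> s / (s\<^sup>2 + e) for 0 \<le> c \<le> s\<^sup>2 \<le> e, with s = \<sigma>\<^sub>1. *)

lemma norm_transpose_mult_le_gram_shift:
  fixes A :: "real^'n^'m"
  assumes "(sigma_max A)\<^sup>2 \<le> e"
  shows "norm (transpose A *v q) * (e + (sigma_max A)\<^sup>2) \<le> sigma_max A * norm (gram_shift A e q)"
proof (rule power2_le_imp_le)
  show "(norm (transpose A *v q) * (e + (sigma_max A)\<^sup>2))\<^sup>2
      \<le> (sigma_max A * norm (gram_shift A e q))\<^sup>2"
    unfolding power_mult_distrib power2_norm_gram_shift using gram_moments[of A q] assms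
    by (intro noise_moments_le) auto
  show "0 \<le> sigma_max A * norm (gram_shift A e q)"
    by (simp add: sigma_max_nonneg)
qed

lemma ntrot_u_decomposition:
  fixes A :: "real^'n^'m" and xs xp :: "real^'n" and nu :: "real^'m"
  assumes e: "e > 0" and y: "y = A *v xs + nu"
  obtains q1 q2 where "gram_shift A e q1 = A *v (xp - xs)" and "gram_shift A e q2 = nu"
    and "ntrot_u A y e l xp - xs = ((xp - xs) - transpose A *v (A *v (xp - xs)))
      + transpose A *v gram_shift A (e - l) q1 + l *\<^sub>R (transpose A *v q2)"
proof -
  define z where "z = xp - xs"
  obtain q1 where q1: "gram_shift A e q1 = A *v z" using gram_shift_surj[OF e] by blast
  obtain q2 where q2: "gram_shift A e q2 = nu" using gram_shift_surj[OF e] by blast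
  have "gram_shift A e (q2 - q1) = nu - A *v z"
    using q1 q2 linear_diff[OF linear_gram_shift, of A e q2 q1] by simp
  then have "y - A *v xp = gram_shift A e (q2 - q1)"
    by (simp add: y z_def matrix_vector_mult_diff_distrib algebra_simps)
  then have u: "ntrot_u A y e l xp = xp + l *\<^sub>R (transpose A *v (q2 - q1))"
    by (simp add: ntrot_u_def regularized_inverse_push_through[OF e])
  have "gram_shift A (e - l) q1 = A *v z - l *\<^sub>R q1"
    using q1 by (simp add: gram_shift_def algebra_simps)
  then have shift: "transpose A *v gram_shift A (e - l) q1
      = transpose A *v (A *v z) - l *\<^sub>R (transpose A *v q1)"
    by (simp add: matrix_vector_mult_diff_distrib matrix_vector_mult_scaleR)
  show thesis
  proof (rule that[OF q1[unfolded z_def] q2])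
    show "ntrot_u A y e l xp - xs = ((xp - xs) - transpose A *v (A *v (xp - xs)))
      + transpose A *v gram_shift A (e - l) q1 + l *\<^sub>R (transpose A *v q2)"
      unfolding u shift z_def
      by (simp add: matrix_vector_mult_diff_distrib scaleR_diff_right algebra_simps)
  qed
qed

lemma ntrot_u_error:
  fixes A :: "real^'n^'m" and xs xp :: "real^'n" and nu :: "real^'m"
  assumes e: "e > 0" and l: "l > 0" and lm: "l \<le> e + (sigma_min A)\<^sup>2"
    and se: "(sigma_max A)\<^sup>2 \<le> e" and y: "y = A *v xs + nu"
    and card: "card (\<Omega> \<union> supp (xp - xs)) \<le> q"
  defines "s \<equiv> sigma_max A"
  shows "norm (restr \<Omega> (ntrot_u A y e l xp - xs))
    \<le> (rip_const A q + s\<^sup>2 - l * s\<^sup>2 / (e + s\<^sup>2)) * norm (xp - xs) + l * s / (e + s\<^sup>2) * norm nu"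
proof -
  define z where "z = xp - xs"
  let ?h = "(s\<^sup>2 + e - l) / (s\<^sup>2 + e)"
  obtain q1 q2 where q1: "gram_shift A e q1 = A *v z" and q2: "gram_shift A e q2 = nu"
    and split: "ntrot_u A y e l xp - xs = (z - transpose A *v (A *v z))
      + transpose A *v gram_shift A (e - l) q1 + l *\<^sub>R (transpose A *v q2)"
    using ntrot_u_decomposition[OF e y] unfolding z_def by metis
  have den: "e + s\<^sup>2 > 0" using e by (simp add: add_pos_nonneg)
  have gram_term: "norm (restr \<Omega> (z - transpose A *v (A *v z))) \<le> rip_const A q * norm z"
    using card unfolding z_def by (rule norm_restr_gram_residual)
  have "norm (gram_shift A (e - l) q1) \<le> ?h * norm (A *v z)"
    using norm_gram_shift_le[OF e l lm, of q1] unfolding q1 s_def .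
  also have "\<dots> \<le> ?h * (s * norm z)"
    using gram_shift_ratio_nonneg[OF e lm] unfolding s_def
    by (intro mult_left_mono norm_mult_le_sigma_max)
  finally have "s * norm (gram_shift A (e - l) q1) \<le> s * (?h * (s * norm z))"
    by (rule mult_left_mono) (simp add: s_def sigma_max_nonneg)
  then have "norm (transpose A *v gram_shift A (e - l) q1) \<le> s * (?h * (s * norm z))"
    using norm_transpose_mult_le[of A "gram_shift A (e - l) q1"] unfolding s_def by linarith
  also have "\<dots> = (s\<^sup>2 - l * s\<^sup>2 / (e + s\<^sup>2)) * norm z"
    using den by (simp add: field_simps power2_eq_square)
  finally have shift_term: "norm (transpose A *v gram_shift A (e - l) q1)
      \<le> (s\<^sup>2 - l * s\<^sup>2 / (e + s\<^sup>2)) * norm z" .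
  have "norm (transpose A *v q2) * (e + s\<^sup>2) \<le> s * norm nu"
    using norm_transpose_mult_le_gram_shift[OF se, of q2] unfolding q2 s_def .
  then have "l * norm (transpose A *v q2) \<le> l * (s / (e + s\<^sup>2) * norm nu)"
    using den l by (intro mult_left_mono) (simp_all add: field_simps)
  then have noise_term: "norm (l *\<^sub>R (transpose A *v q2)) \<le> l * s / (e + s\<^sup>2) * norm nu"
    using l by simp
  have "norm (restr \<Omega> (ntrot_u A y e l xp - xs))
      \<le> norm (restr \<Omega> (z - transpose A *v (A *v z)))
        + norm (restr \<Omega> (transpose A *v gram_shift A (e - l) q1))
        + norm (restr \<Omega> (l *\<^sub>R (transpose A *v q2)))"
    unfolding split restr_add
    by (rule order_trans[OF norm_triangle_ineq add_right_mono[OF norm_triangle_ineq]])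
  then have "norm (restr \<Omega> (ntrot_u A y e l xp - xs))
      \<le> rip_const A q * norm z + (s\<^sup>2 - l * s\<^sup>2 / (e + s\<^sup>2)) * norm z + l * s / (e + s\<^sup>2) * norm nu"
    using gram_term shift_term noise_term norm_restr_le[of \<Omega> "transpose A *v gram_shift A (e - l) q1"]
      norm_restr_le[of \<Omega> "l *\<^sub>R (transpose A *v q2)"] by linarith
  then show ?thesis
    by (simp add: z_def algebra_simps)
qed

section \<open>Vertices of the relaxed weight polytope\<close>

definition frac_coords :: "real^'n \<Rightarrow> 'n set" where
  "frac_coords w = {i. 0 < w $ i \<and> w $ i < 1}"

lemma sum_indicator_real: "(\<Sum>i\<in>UNIV. if i \<in> T then 1 else 0 :: real) = real (card (T::'n::finite set))"
  by (simp add: sum.If_cases)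

lemma ntrot_feasible_no_frac_coords:
  assumes "ntrot_feasible k w" "frac_coords w = {}"
  shows "\<exists>T. card T = k \<and> hadamard g w = restr T g"
proof -
  let ?T = "{i. w $ i = 1}"
  have w: "w $ i = (if i \<in> ?T then 1 else 0)" for i
    using assms unfolding ntrot_feasible_def frac_coords_def
    by (metis (mono_tags) empty_iff mem_Collect_eq order_le_less)
  have "real k = (\<Sum>i\<in>UNIV. w $ i)" using assms(1) by (simp add: ntrot_feasible_def)
  also have "\<dots> = real (card ?T)" by (subst w) (rule sum_indicator_real)
  finally have "card ?T = k" by simp
  moreover have "hadamard g w = restr ?T g"
    by (simp add: vec_eq_iff) (metis w mult_zero_right mult.right_neutral)
  ultimately show ?thesis by blast
qed

lemma ntrot_feasible_frac_coords_not_singleton: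
  assumes feas: "ntrot_feasible k w" and i: "i \<in> frac_coords w"
  shows "\<exists>j. j \<in> frac_coords w \<and> j \<noteq> i"
proof (rule ccontr)
  assume "\<not> ?thesis"
  then have frac: "j \<notin> frac_coords w" if "j \<noteq> i" for j using that by blast
  let ?T = "{j. j \<noteq> i \<and> w $ j = 1}"
  have wj: "w $ j = (if j \<in> ?T then 1 else 0)" if "j \<noteq> i" for j
    using feas frac[OF that] that unfolding ntrot_feasible_def frac_coords_def
    by (metis (mono_tags) mem_Collect_eq order_le_less)
  have "real k = w $ i + (\<Sum>j\<in>UNIV - {i}. w $ j)"
    using feas sum.remove[of UNIV i "\<lambda>j. w $ j"] by (simp add: ntrot_feasible_def)
  also have "(\<Sum>j\<in>UNIV - {i}. w $ j) = (\<Sum>j\<in>UNIV. if j \<in> ?T then 1 else 0)"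
    using wj by (intro sum.mono_neutral_cong_left) auto
  also have "\<dots> = real (card ?T)" by (rule sum_indicator_real)
  finally have eq: "w $ i = real k - real (card ?T)" by simp
  have "0 < w $ i" "w $ i < 1" using i by (auto simp: frac_coords_def)
  then show False unfolding eq by (cases "card ?T < k") auto
qed

lemma ntrot_feasible_split:
  fixes w :: "real^'n"
  assumes feas: "ntrot_feasible k w" and i: "i \<in> frac_coords w"
  obtains w1 w2 t where "ntrot_feasible k w1" "ntrot_feasible k w2"
    "frac_coords w1 \<subset> frac_coords w" "frac_coords w2 \<subset> frac_coords w"
    "0 \<le> t" "t \<le> 1" "w = (1 - t) *\<^sub>R w1 + t *\<^sub>R w2"
proof -
  obtain j where j: "j \<in> frac_coords w" "j \<noteq> i"
    using ntrot_feasible_frac_coords_not_singleton[OF feas i] by blast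
  have wi: "0 < w $ i" "w $ i < 1" and wj: "0 < w $ j" "w $ j < 1"
    using i j by (auto simp: frac_coords_def)
  have wb: "0 \<le> w $ l" "w $ l \<le> 1" for l using feas by (auto simp: ntrot_feasible_def)
  define d :: "real^'n" where "d = (\<chi> l. (if l = i then 1 else 0) - (if l = j then 1 else 0))"
  have d_sum: "(\<Sum>l\<in>UNIV. d $ l) = 0"
    by (simp add: d_def sum_subtractf)
  have d_nth: "d $ i = 1" "d $ j = -1" "\<And>l. l \<noteq> i \<Longrightarrow> l \<noteq> j \<Longrightarrow> d $ l = 0"
    using j(2) by (auto simp: d_def)
  define t1 where "t1 = min (1 - w $ i) (w $ j)"
  define t2 where "t2 = min (w $ i) (1 - w $ j)"
  have t1: "t1 > 0" and t2: "t2 > 0" using wi wj by (auto simp: t1_def t2_def)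
  define w1 where "w1 = w + t1 *\<^sub>R d"
  define w2 where "w2 = w - t2 *\<^sub>R d"
  have sums: "(\<Sum>l\<in>UNIV. w1 $ l) = (\<Sum>l\<in>UNIV. w $ l)" "(\<Sum>l\<in>UNIV. w2 $ l) = (\<Sum>l\<in>UNIV. w $ l)"
    using d_sum by (simp_all add: w1_def w2_def sum.distrib sum_subtractf flip: sum_distrib_left)
  have "0 \<le> w1 $ l \<and> w1 $ l \<le> 1" for l
    using wb[of l] d_nth t1 by (cases "l = i"; cases "l = j") (auto simp: w1_def t1_def)
  then have feas1: "ntrot_feasible k w1"
    using feas sums(1) unfolding ntrot_feasible_def by simp
  have "0 \<le> w2 $ l \<and> w2 $ l \<le> 1" for l
    using wb[of l] d_nth t2 by (cases "l = i"; cases "l = j") (auto simp: w2_def t2_def)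
  then have feas2: "ntrot_feasible k w2"
    using feas sums(2) unfolding ntrot_feasible_def by simp
  have frac1: "frac_coords w1 \<subset> frac_coords w"
  proof
    show "frac_coords w1 \<subseteq> frac_coords w"
    proof
      fix l assume "l \<in> frac_coords w1"
      then show "l \<in> frac_coords w"
        using i j d_nth(3)[of l] by (cases "l = i \<or> l = j") (auto simp: frac_coords_def w1_def)
    qed
    have "i \<notin> frac_coords w1 \<or> j \<notin> frac_coords w1"
      using d_nth by (auto simp: frac_coords_def w1_def t1_def min_def)
    then show "frac_coords w1 \<noteq> frac_coords w" using i j by blast
  qed
  have frac2: "frac_coords w2 \<subset> frac_coords w"
  proof
    show "frac_coords w2 \<subseteq> frac_coords w"
    proof
      fix l assume "l \<in> frac_coords w2"
      then show "l \<in> frac_coords w"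
        using i j d_nth(3)[of l] by (cases "l = i \<or> l = j") (auto simp: frac_coords_def w2_def)
    qed
    have "i \<notin> frac_coords w2 \<or> j \<notin> frac_coords w2"
      using d_nth by (auto simp: frac_coords_def w2_def t2_def min_def)
    then show "frac_coords w2 \<noteq> frac_coords w" using i j by blast
  qed
  define t where "t = t1 / (t1 + t2)"
  have "(1 - t) *\<^sub>R w1 + t *\<^sub>R w2 = w + ((1 - t) * t1 - t * t2) *\<^sub>R d"
    by (simp add: w1_def w2_def algebra_simps)
  moreover have "(1 - t) * t1 - t * t2 = 0"
    using t1 t2 by (simp add: t_def field_simps)
  ultimately have "w = (1 - t) *\<^sub>R w1 + t *\<^sub>R w2" by simp
  moreover have "0 \<le> t" "t \<le> 1" using t1 t2 by (auto simp: t_def)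
  ultimately show thesis using that[OF feas1 feas2 frac1 frac2] by blast
qed

lemma convex_hadamard_le_vertex:
  fixes f :: "real^'n \<Rightarrow> real"
  assumes f: "convex_on UNIV f" and "ntrot_feasible k w"
  shows "\<exists>T. card T = k \<and> f (hadamard g w) \<le> f (restr T g)"
  using assms(2)
proof (induction "card (frac_coords w)" arbitrary: w rule: less_induct)
  case less
  show ?case
  proof (cases "frac_coords w = {}")
    case True
    then show ?thesis using ntrot_feasible_no_frac_coords[OF less.prems True, of g] by auto
  next
    case False
    then obtain i where "i \<in> frac_coords w" by blast
    then obtain w1 w2 t where w12: "ntrot_feasible k w1" "ntrot_feasible k w2"
      "frac_coords w1 \<subset> frac_coords w" "frac_coords w2 \<subset> frac_coords w"
      and t: "0 \<le> t" "t \<le> 1" and w: "w = (1 - t) *\<^sub>R w1 + t *\<^sub>R w2"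
      using ntrot_feasible_split[OF less.prems] by metis
    obtain T1 where T1: "card T1 = k" "f (hadamard g w1) \<le> f (restr T1 g)"
      using less.hyps[OF psubset_card_mono[OF finite w12(3)] w12(1)] by blast
    obtain T2 where T2: "card T2 = k" "f (hadamard g w2) \<le> f (restr T2 g)"
      using less.hyps[OF psubset_card_mono[OF finite w12(4)] w12(2)] by blast
    have "hadamard g w = (1 - t) *\<^sub>R hadamard g w1 + t *\<^sub>R hadamard g w2"
      by (simp add: w vec_eq_iff algebra_simps)
    then have "f (hadamard g w) \<le> (1 - t) * f (hadamard g w1) + t * f (hadamard g w2)"
      using convex_onD[OF f t] by simp
    also have "\<dots> \<le> (1 - t) * max (f (restr T1 g)) (f (restr T2 g)) + t * max (f (restr T1 g)) (f (restr T2 g))"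
      using t T1 T2 by (intro add_mono mult_left_mono) auto
    also have "\<dots> = max (f (restr T1 g)) (f (restr T2 g))" by (simp add: algebra_simps)
    finally show ?thesis using T1 T2 by (auto simp: max_def split: if_splits)
  qed
qed

lemma convex_on_norm_matrix_mult: "convex_on UNIV (\<lambda>v. norm ((A::real^'n^'m) *v v))"
proof (rule convex_onI)
  fix t :: real and x y assume "0 < t" "t < 1"
  then show "norm (A *v ((1 - t) *\<^sub>R x + t *\<^sub>R y)) \<le> (1 - t) * norm (A *v x) + t * norm (A *v y)"
    using norm_triangle_ineq[of "(1 - t) *\<^sub>R (A *v x)" "t *\<^sub>R (A *v y)"]
    by (simp add: matrix_vector_right_distrib matrix_vector_mult_scaleR)
qed simp

section \<open>The relaxed thresholding step\<close>

lemma sum_le_sum_if_card_eq: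
  fixes f g :: "'a \<Rightarrow> real"
  assumes "finite P" "finite Q" "card P = card Q" "\<And>i j. i \<in> P \<Longrightarrow> j \<in> Q \<Longrightarrow> f i \<le> g j"
  shows "sum f P \<le> sum g Q"
proof (cases "Q = {}")
  case False
  have "Min (g ` Q) \<in> g ` Q" using False assms(2) by simp
  then obtain j0 where j0: "j0 \<in> Q" "g j0 = Min (g ` Q)" by (metis imageE)
  have "sum f P \<le> of_nat (card P) * g j0"
    using assms(4) j0(1) by (intro sum_bounded_above) auto
  also have "\<dots> = of_nat (card Q) * g j0" using assms(3) by simp
  also have "\<dots> \<le> sum g Q"
    using assms(2) j0(2) by (intro sum_bounded_below) simp
  finally show ?thesis .
qed (use assms in simp)

lemma is_Lk_sum_power2_le:
  assumes "is_Lk k v L" "card S = k"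
  shows "(\<Sum>i\<in>S - L. (v $ i)\<^sup>2) \<le> (\<Sum>i\<in>L - S. (v $ i)\<^sup>2)"
proof (rule sum_le_sum_if_card_eq)
  have "card (S - L) = card S - card (S \<inter> L)" "card (L - S) = card L - card (L \<inter> S)"
    by (simp_all add: card_Diff_subset_Int)
  then show "card (S - L) = card (L - S)"
    using assms by (simp add: is_Lk_def Int_commute)
  fix i j assume "i \<in> S - L" "j \<in> L - S"
  then show "(v $ i)\<^sup>2 \<le> (v $ j)\<^sup>2"
    using assms(1) by (simp add: is_Lk_def abs_le_square_iff)
qed simp_all

lemma norm_threshold_minus_hadamard_le:
  fixes u w xS :: "real^'n"
  assumes xS: "supp xS \<subseteq> S" and S: "card S = k" and L: "is_Lk k (hadamard u w) L"
    and w: "\<And>i. 0 \<le> w $ i \<and> w $ i \<le> 1"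
  shows "norm (restr L (hadamard u w) - hadamard xS w) \<le> 2 * norm (restr (L \<union> S) (u - xS))"
proof -
  let ?v = "hadamard u w" and ?e = "u - xS"
  let ?E = "\<lambda>i. (?e $ i * w $ i)\<^sup>2"
  have xS0: "xS $ i = 0" if "i \<notin> S" for i using xS that by (auto simp: supp_def)
  have "(norm (restr L ?v - hadamard xS w))\<^sup>2
      = (\<Sum>i\<in>UNIV. (if i \<in> L then ?E i else 0) + (if i \<in> S - L then (xS $ i * w $ i)\<^sup>2 else 0))"
    unfolding power2_norm_vec_eq_sum using xS0 by (intro sum.cong) (auto simp: algebra_simps)
  also have "\<dots> = sum ?E L + (\<Sum>i\<in>S - L. (xS $ i * w $ i)\<^sup>2)"
    by (simp add: sum.distrib sum.If_cases) (simp add: set_diff_eq)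
  finally have norm_eq: "(norm (restr L ?v - hadamard xS w))\<^sup>2
      = sum ?E L + (\<Sum>i\<in>S - L. (xS $ i * w $ i)\<^sup>2)" .
  have "(\<Sum>i\<in>S - L. (xS $ i * w $ i)\<^sup>2) \<le> (\<Sum>i\<in>S - L. 2 * (?v $ i)\<^sup>2 + 2 * ?E i)"
  proof (rule sum_mono)
    fix i
    have "2 * (?v $ i)\<^sup>2 + 2 * ?E i - (xS $ i * w $ i)\<^sup>2 = (?v $ i + ?e $ i * w $ i)\<^sup>2"
      by (simp add: power2_eq_square algebra_simps)
    then show "(xS $ i * w $ i)\<^sup>2 \<le> 2 * (?v $ i)\<^sup>2 + 2 * ?E i"
      using zero_le_power2[of "?v $ i + ?e $ i * w $ i"] by linarith
  qed
  also have "\<dots> = 2 * (\<Sum>i\<in>S - L. (?v $ i)\<^sup>2) + 2 * sum ?E (S - L)"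
    by (simp add: sum.distrib sum_distrib_left)
  finally have "(\<Sum>i\<in>S - L. (xS $ i * w $ i)\<^sup>2)
      \<le> 2 * (\<Sum>i\<in>S - L. (?v $ i)\<^sup>2) + 2 * sum ?E (S - L)" .
  moreover have "(\<Sum>i\<in>S - L. (?v $ i)\<^sup>2) \<le> (\<Sum>i\<in>L - S. (?v $ i)\<^sup>2)"
    using L S by (rule is_Lk_sum_power2_le)
  moreover have "(\<Sum>i\<in>L - S. (?v $ i)\<^sup>2) = sum ?E (L - S)"
    by (rule sum.cong) (auto simp: xS0)
  ultimately have outside: "(\<Sum>i\<in>S - L. (xS $ i * w $ i)\<^sup>2) \<le> 2 * sum ?E (L - S) + 2 * sum ?E (S - L)"
    by linarith
  have "sum ?E (L - S) + sum ?E (S - L) = sum ?E ((L - S) \<union> (S - L))"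
    by (rule sum.union_disjoint[symmetric]) auto
  also have "\<dots> \<le> sum ?E (L \<union> S)" by (rule sum_mono2) auto
  finally have sym_diff: "sum ?E (L - S) + sum ?E (S - L) \<le> sum ?E (L \<union> S)" .
  have inside: "sum ?E L \<le> sum ?E (L \<union> S)" by (rule sum_mono2) auto
  have weights: "sum ?E (L \<union> S) \<le> (norm (restr (L \<union> S) ?e))\<^sup>2"
    unfolding power2_norm_restr
  proof (rule sum_mono)
    fix i
    have "(w $ i)\<^sup>2 \<le> 1" using w[of i] by (simp add: abs_square_le_1)
    then show "?E i \<le> (?e $ i)\<^sup>2"
      using mult_left_mono[of "(w $ i)\<^sup>2" 1 "(?e $ i)\<^sup>2"] by (simp add: power_mult_distrib)
  qed
  have "0 \<le> sum ?E (L \<union> S)" by (rule sum_nonneg) simp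
  then have "(norm (restr L ?v - hadamard xS w))\<^sup>2 \<le> 4 * (norm (restr (L \<union> S) ?e))\<^sup>2"
    unfolding norm_eq using outside sym_diff inside weights by linarith
  also have "\<dots> = (2 * norm (restr (L \<union> S) ?e))\<^sup>2" by (simp add: power_mult_distrib)
  finally show ?thesis by (rule power2_le_imp_le) simp
qed

lemma ntrot_weight_defect_bound:
  fixes A :: "real^'n^'m"
  assumes y: "y = A *v xS + nu" and xS: "supp xS \<subseteq> S" and S: "card S = k"
    and feas: "ntrot_feasible k w"
    and opt: "\<forall>w'. ntrot_feasible k w' \<longrightarrow>
           (norm (y - A *v hadamard u w))\<^sup>2 \<le> (norm (y - A *v hadamard u w'))\<^sup>2"
  obtains T where "card T = k" and "norm (A *v (xS - hadamard xS w))
     \<le> 2 * norm nu + norm (A *v restr S (u - xS)) + norm (A *v restr T (u - xS))"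
proof -
  let ?e = "u - xS"
  define wS :: "real^'n" where "wS = (\<chi> i. if i \<in> S then 1 else 0)"
  have "ntrot_feasible k wS"
    unfolding ntrot_feasible_def wS_def using sum_indicator_real[of S] S by simp
  moreover have "hadamard u wS = restr S u" by (simp add: vec_eq_iff wS_def)
  ultimately have "(norm (y - A *v hadamard u w))\<^sup>2 \<le> (norm (y - A *v restr S u))\<^sup>2"
    using opt by metis
  then have "norm (y - A *v hadamard u w) \<le> norm (y - A *v restr S u)"
    by (rule power2_le_imp_le) simp
  also have "y - A *v restr S u = nu - A *v restr S ?e"
    using restr_eq_self_if_supp_subset[OF xS] by (simp add: y restr_diff matrix_vector_mult_diff_distrib)
  finally have residual: "norm (y - A *v hadamard u w) \<le> norm nu + norm (A *v restr S ?e)"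
    using norm_triangle_ineq4[of nu "A *v restr S ?e"] by linarith
  obtain T where T: "card T = k" "norm (A *v hadamard ?e w) \<le> norm (A *v restr T ?e)"
    using convex_hadamard_le_vertex[OF convex_on_norm_matrix_mult feas] by blast
  have "A *v (xS - hadamard xS w) = (y - A *v hadamard u w) - nu + A *v hadamard ?e w"
    using hadamard_add_left[of xS ?e w]
    by (simp add: y matrix_vector_right_distrib matrix_vector_mult_diff_distrib)
  then have "norm (A *v (xS - hadamard xS w))
      \<le> norm (y - A *v hadamard u w - nu) + norm (A *v hadamard ?e w)"
    by (simp add: norm_triangle_ineq)
  also have "norm (y - A *v hadamard u w - nu) \<le> norm (y - A *v hadamard u w) + norm nu"
    by (rule norm_triangle_ineq4)
  finally show thesis
    using T residual by (intro that[OF T(1)]) linarith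
qed

lemma rot_error_bound:
  fixes A :: "real^'n^'m" and u xS :: "real^'n"
  assumes y: "y = A *v xS + nu" and xS: "supp xS \<subseteq> S" and S: "card S = k"
    and dk: "rip_const A k < 1" and feas: "ntrot_feasible k w"
    and opt: "\<forall>w'. ntrot_feasible k w' \<longrightarrow>
           (norm (y - A *v hadamard u w))\<^sup>2 \<le> (norm (y - A *v hadamard u w'))\<^sup>2"
    and L: "is_Lk k (hadamard u w) L"
  obtains T where "card T = k" and "norm (restr L (hadamard u w) - xS)
    \<le> 2 * norm (restr (L \<union> S) (u - xS)) + (2 * norm nu
       + sqrt (1 + rip_const A k) * (norm (restr S (u - xS)) + norm (restr T (u - xS))))
       / sqrt (1 - rip_const A k)"
proof -
  let ?e = "u - xS" and ?a = "sqrt (1 + rip_const A k)" and ?b = "sqrt (1 - rip_const A k)"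
  define d where "d = xS - hadamard xS w"
  obtain T where T: "card T = k"
    and Ad: "norm (A *v d) \<le> 2 * norm nu + norm (A *v restr S ?e) + norm (A *v restr T ?e)"
    using ntrot_weight_defect_bound[OF y xS S feas opt] unfolding d_def by blast
  have sparse: "ksparse k (restr S ?e)" "ksparse k (restr T ?e)"
    using supp_restr[of S ?e] supp_restr[of T ?e] S T
    by (auto intro: ksparse_if_supp_subset)
  have "supp d \<subseteq> S" using xS by (auto simp: d_def supp_def)
  then have sparse_d: "ksparse k d" using S by (auto intro: ksparse_if_supp_subset)
  have "?b * norm d \<le> norm (A *v d)"
    using rip_le_norm_mult[OF sparse_d, of A] dk by simp
  also have "\<dots> \<le> 2 * norm nu + ?a * (norm (restr S ?e) + norm (restr T ?e))"
    using Ad norm_mult_le_rip[OF sparse(1), of A] norm_mult_le_rip[OF sparse(2), of A]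
    by (simp add: distrib_left)
  finally have "norm d \<le> (2 * norm nu + ?a * (norm (restr S ?e) + norm (restr T ?e))) / ?b"
    using dk by (simp add: pos_le_divide_eq mult.commute)
  moreover have "norm (restr L (hadamard u w) - hadamard xS w) \<le> 2 * norm (restr (L \<union> S) ?e)"
    using xS S L feas by (intro norm_threshold_minus_hadamard_le) (auto simp: ntrot_feasible_def)
  moreover have "norm (restr L (hadamard u w) - xS)
      \<le> norm (restr L (hadamard u w) - hadamard xS w) + norm d"
    using norm_triangle_ineq4[of "restr L (hadamard u w) - hadamard xS w" d] by (simp add: d_def)
  ultimately show thesis by (intro that[OF T]) linarith
qed

definition ntrot_rho :: "real^'n^'m \<Rightarrow> nat \<Rightarrow> real \<Rightarrow> real \<Rightarrow> real" where
  "ntrot_rho A k e l =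
     sqrt ((1 + rip_const A k) / (1 - rip_const A (2*k))) *
       (rip_const A (2*k) + 2 * rip_const A (3*k) + 3 * (sigma_max A)\<^sup>2
        - 3 * l * (sigma_max A)\<^sup>2 / (e + (sigma_max A)\<^sup>2))
     + rip_const A (3*k) + (sigma_max A)\<^sup>2 - l * (sigma_max A)\<^sup>2 / (e + (sigma_max A)\<^sup>2)"

definition ntrot_tau :: "real^'n^'m \<Rightarrow> nat \<Rightarrow> real \<Rightarrow> real \<Rightarrow> real" where
  "ntrot_tau A k e l =
     1 / sqrt (1 - rip_const A (2*k)) *
       (3 * l * sigma_max A * sqrt (1 + rip_const A k) / (e + (sigma_max A)\<^sup>2) + 2)
     + l * sigma_max A / (e + (sigma_max A)\<^sup>2)"

lemma ntrot_rho_eq: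
  fixes A :: "real^'n^'m" and e l :: real
  defines "t \<equiv> (sigma_max A)\<^sup>2 - l * (sigma_max A)\<^sup>2 / (e + (sigma_max A)\<^sup>2)"
  shows "ntrot_rho A k e l = sqrt (1 + rip_const A k) / sqrt (1 - rip_const A (2*k))
    * (rip_const A (2*k) + 2 * rip_const A (3*k) + 3 * t) + rip_const A (3*k) + t"
  unfolding ntrot_rho_def t_def by (simp add: real_sqrt_divide algebra_simps)

lemma ntrot_tau_eq:
  fixes A :: "real^'n^'m" and e l :: real
  defines "\<beta> \<equiv> l * sigma_max A / (e + (sigma_max A)\<^sup>2)"
  shows "ntrot_tau A k e l = 3 * \<beta> * (sqrt (1 + rip_const A k) / sqrt (1 - rip_const A (2*k)))
    + 2 * (1 / sqrt (1 - rip_const A (2*k))) + \<beta>"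
proof -
  have "ntrot_tau A k e l = 1 / sqrt (1 - rip_const A (2*k)) * (3 * \<beta> * sqrt (1 + rip_const A k) + 2) + \<beta>"
    unfolding ntrot_tau_def \<beta>_def by simp
  then show ?thesis by (simp add: distrib_left)
qed

lemma ntrot_step_threshold_error:
  fixes A :: "real^'n^'m"
  assumes y: "y = A *v xS + nu" and xS: "supp xS \<subseteq> S" and S: "card S = k"
    and d2: "rip_const A (2*k) < 1" and step: "ntrot_step A y k e l xp xq"
  defines "v \<equiv> ntrot_u A y e l xp - xS"
  obtains L T where "card L = k" and "card T = k" and "norm (xq - xS)
    \<le> 2 * norm (restr (L \<union> S) v) + 1 / sqrt (1 - rip_const A (2*k)) * (2 * norm nu)
      + sqrt (1 + rip_const A k) / sqrt (1 - rip_const A (2*k)) * (norm (restr S v) + norm (restr T v))"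
proof -
  let ?a = "sqrt (1 + rip_const A k)" and ?b = "sqrt (1 - rip_const A (2*k))"
  obtain w L where feas: "ntrot_feasible k w"
    and opt: "\<forall>w'. ntrot_feasible k w' \<longrightarrow> (norm (y - A *v hadamard (ntrot_u A y e l xp) w))\<^sup>2
      \<le> (norm (y - A *v hadamard (ntrot_u A y e l xp) w'))\<^sup>2"
    and L: "is_Lk k (hadamard (ntrot_u A y e l xp) w) L"
    and xq: "xq = restr L (hadamard (ntrot_u A y e l xp) w)"
    using step unfolding ntrot_step_def Let_def by blast
  have rip: "rip_const A k \<le> rip_const A (2*k)" by (simp add: rip_const_mono)
  then have dk: "rip_const A k < 1" using d2 by linarith
  obtain T where T: "card T = k" and rot: "norm (xq - xS)
    \<le> 2 * norm (restr (L \<union> S) v) + (2 * norm nu + ?a * (norm (restr S v) + norm (restr T v)))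
      / sqrt (1 - rip_const A k)"
    unfolding xq v_def by (rule rot_error_bound[OF y xS S dk feas opt L])
  have "(2 * norm nu + ?a * (norm (restr S v) + norm (restr T v))) / sqrt (1 - rip_const A k)
      \<le> (2 * norm nu + ?a * (norm (restr S v) + norm (restr T v))) / ?b"
    using rip d2 rip_const_nonneg[of A k]
    by (intro divide_left_mono add_nonneg_nonneg mult_nonneg_nonneg) auto
  also have "\<dots> = 1 / ?b * (2 * norm nu) + ?a / ?b * (norm (restr S v) + norm (restr T v))"
    by (simp add: add_divide_distrib)
  finally show thesis
    using L T rot by (intro that[of L T]) (auto simp: is_Lk_def)
qed

lemma error_combination:
  fixes r c d2 d3 t \<beta> Z N E1 E2 E3 :: real
  assumes "1 \<le> r" "0 \<le> Z" "0 \<le> N" "0 \<le> \<beta>" "0 \<le> d3 + t"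
    and "E1 \<le> (d3 + t) * Z + \<beta> * N" "E2 \<le> (d2 + t) * Z + \<beta> * N" "E3 \<le> (d3 + t) * Z + \<beta> * N"
  shows "2 * E1 + c * (2 * N) + r * (E2 + E3)
    \<le> (r * (d2 + 2 * d3 + 3 * t) + d3 + t) * Z + (3 * \<beta> * r + 2 * c + \<beta>) * N"
proof -
  have "r * (E2 + E3) \<le> r * ((d2 + d3 + 2 * t) * Z + 2 * \<beta> * N)"
    using assms by (intro mult_left_mono) (auto simp: algebra_simps)
  moreover have "0 \<le> (d3 + t) * Z + \<beta> * N" using assms by simp
  then have "0 \<le> (r - 1) * ((d3 + t) * Z + \<beta> * N)" using assms by simp
  ultimately show ?thesis
    using assms(6) by (simp add: algebra_simps)
qed

lemma ntrot_step_error: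
  fixes A :: "real^'n^'m" and x xp xq :: "real^'n" and eta :: "real^'m"
  assumes e: "e > 0" and l: "l > 0" and lm: "l \<le> e + (sigma_min A)\<^sup>2"
    and se: "(sigma_max A)\<^sup>2 \<le> e" and d3: "rip_const A (3*k) < 1"
    and y: "y = A *v x + eta" and S: "is_Lk k x S" and xp: "ksparse k xp"
    and step: "ntrot_step A y k e l xp xq"
  shows "norm (xq - restr S x)
    \<le> ntrot_rho A k e l * norm (xp - restr S x) + ntrot_tau A k e l * norm (A *v restr (- S) x + eta)"
proof -
  define xS where "xS = restr S x"
  define nu where "nu = A *v restr (- S) x + eta"
  define s where "s = sigma_max A"
  define t where "t = s\<^sup>2 - l * s\<^sup>2 / (e + s\<^sup>2)"
  define \<beta> where "\<beta> = l * s / (e + s\<^sup>2)"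
  define v where "v = ntrot_u A y e l xp - xS"
  let ?d2 = "rip_const A (2*k)" and ?d3 = "rip_const A (3*k)"
  let ?r = "sqrt (1 + rip_const A k) / sqrt (1 - ?d2)"
  have rip: "0 \<le> rip_const A k" "rip_const A k \<le> ?d2" "?d2 \<le> ?d3"
    by (simp_all add: rip_const_nonneg rip_const_mono)
  have "A *v xS + nu = A *v (restr S x + restr (- S) x) + eta"
    by (simp add: xS_def nu_def matrix_vector_right_distrib add.assoc)
  also have "restr S x + restr (- S) x = x" by (simp add: vec_eq_iff)
  finally have yS: "y = A *v xS + nu" by (simp add: y)
  have cS: "card S = k" using S by (simp add: is_Lk_def)
  have xS: "supp xS \<subseteq> S" unfolding xS_def by (rule supp_restr)
  have d2: "?d2 < 1" using rip d3 by linarith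
  have err: "norm (restr \<Omega> v) \<le> (rip_const A q + t) * norm (xp - xS) + \<beta> * norm nu"
    if "card (\<Omega> \<union> S) + k \<le> q" for \<Omega> q
    using ntrot_u_error[OF e l lm se yS] card_Un_supp_diff_le[OF xp xS, of \<Omega>] that
    unfolding v_def t_def \<beta>_def s_def by (simp add: algebra_simps)
  have "0 \<le> s\<^sup>2 * ((s\<^sup>2 + e - l) / (s\<^sup>2 + e))"
    using gram_shift_ratio_nonneg[OF e lm] unfolding s_def by (intro mult_nonneg_nonneg) simp_all
  also have "\<dots> = t"
    using e add_pos_nonneg[OF e, of "s\<^sup>2"] by (simp add: t_def field_simps)
  finally have t0: "0 \<le> t" .
  obtain L T where L: "card L = k" and T: "card T = k" and rot: "norm (xq - xS)
    \<le> 2 * norm (restr (L \<union> S) v) + 1 / sqrt (1 - ?d2) * (2 * norm nu)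
      + ?r * (norm (restr S v) + norm (restr T v))"
    unfolding v_def by (rule ntrot_step_threshold_error[OF yS xS cS d2 step])
  have "2 * norm (restr (L \<union> S) v) + 1 / sqrt (1 - ?d2) * (2 * norm nu)
      + ?r * (norm (restr S v) + norm (restr T v))
    \<le> (?r * (?d2 + 2 * ?d3 + 3 * t) + ?d3 + t) * norm (xp - xS)
      + (3 * \<beta> * ?r + 2 * (1 / sqrt (1 - ?d2)) + \<beta>) * norm nu"
  proof (rule error_combination)
    show "1 \<le> ?r" using rip d3 by simp
    show "0 \<le> ?d3 + t" using rip t0 by linarith
    show "0 \<le> \<beta>" using e l by (simp add: \<beta>_def s_def sigma_max_nonneg add_pos_nonneg)
    show "norm (restr (L \<union> S) v) \<le> (?d3 + t) * norm (xp - xS) + \<beta> * norm nu"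
      using card_Un_le[of L S] L cS by (intro err) (simp add: Un_absorb2)
    show "norm (restr S v) \<le> (?d2 + t) * norm (xp - xS) + \<beta> * norm nu"
      using cS by (intro err) simp
    show "norm (restr T v) \<le> (?d3 + t) * norm (xp - xS) + \<beta> * norm nu"
      using card_Un_le[of T S] T cS by (intro err) simp
  qed simp_all
  with rot show ?thesis
    unfolding ntrot_rho_eq ntrot_tau_eq xS_def nu_def t_def \<beta>_def s_def by (rule order_trans)
qed

lemma ntrot_parameter_bounds:
  fixes dk d2 d3 s2 e l :: real
  defines "g \<equiv> 1 / (3 * sqrt ((1 + d3) / (1 - d3)) + 1)"
  assumes rip: "0 \<le> dk" "dk \<le> d2" "d2 \<le> d3" "d3 < 1"
    and s2: "1 - d3 \<le> s2" and e: "0 < e + s2"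
    and l: "e + s2 + (d3 - g) * (e + s2) / s2 < l"
  shows "0 < l"
    and "sqrt ((1 + dk) / (1 - d2)) * (d2 + 2 * d3 + 3 * s2 - 3 * l * s2 / (e + s2))
         + d3 + s2 - l * s2 / (e + s2) < 1"
proof -
  let ?R3 = "sqrt ((1 + d3) / (1 - d3))" and ?R = "sqrt ((1 + dk) / (1 - d2))"
  define t where "t = s2 - l * s2 / (e + s2)"
  have R3: "1 \<le> ?R3" using rip by simp
  have den3: "4 \<le> 3 * ?R3 + 1" using R3 by linarith
  then have pos3: "0 < 3 * ?R3 + 1" by linarith
  have g: "0 < g" "g \<le> 1 / 4" "g * (3 * ?R3 + 1) = 1"
    unfolding g_def
    by (rule divide_pos_pos[OF zero_less_one pos3], rule frac_le, simp_all add: den3,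
        simp add: less_imp_neq[OF pos3, symmetric])
  have s2_pos: "0 < s2" using s2 rip by linarith
  have flip: "(d3 - g) * (e + s2) / s2 = - ((g - d3) * (e + s2) / s2)"
    by (metis minus_diff_eq mult_minus_left minus_divide_left)
  have "e + s2 - l < (g - d3) * (e + s2) / s2"
    using l flip by linarith
  then have "s2 * (e + s2 - l) < (g - d3) * (e + s2)"
    using s2_pos by (simp add: pos_less_divide_eq mult.commute)
  then have "s2 * (e + s2 - l) / (e + s2) < g - d3"
    using e by (simp add: pos_divide_less_eq)
  moreover have "s2 * (e + s2 - l) / (e + s2) = t"
    using e by (simp add: t_def field_simps)
  ultimately have t: "t < g - d3" by simp
  have "(g - d3) * (e + s2) < s2 * (e + s2)"
    using g s2 rip e by (intro mult_strict_right_mono) auto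
  then have "(g - d3) * (e + s2) / s2 < e + s2"
    using s2_pos by (simp add: pos_divide_less_eq mult.commute)
  then have "0 < e + s2 + (d3 - g) * (e + s2) / s2" unfolding flip by linarith
  then show "0 < l" using l by linarith
  have R: "0 < ?R" "?R \<le> ?R3"
    using rip by (auto intro!: frac_le)
  have "?R * (d2 + 2 * d3 + 3 * t) < ?R * (d2 + 2 * d3 + 3 * (g - d3))"
    using R t by (intro mult_strict_left_mono) auto
  also have "\<dots> \<le> ?R * (3 * g)"
    using R rip by (intro mult_left_mono) auto
  also have "\<dots> \<le> ?R3 * (3 * g)"
    using R g by (intro mult_right_mono) auto
  finally have "?R * (d2 + 2 * d3 + 3 * t) + d3 + t < g * (3 * ?R3 + 1)"
    using t by (simp add: algebra_simps)
  then show "?R * (d2 + 2 * d3 + 3 * s2 - 3 * l * s2 / (e + s2)) + d3 + s2 - l * s2 / (e + s2) < 1"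
    using g(3) by (simp add: t_def algebra_simps)
qed

lemma ntrot_step_ksparse:
  assumes "ntrot_step A y k e l xp xq"
  shows "ksparse k xq"
proof -
  obtain w L where "is_Lk k (hadamard (ntrot_u A y e l xp) w) L"
    and "xq = restr L (hadamard (ntrot_u A y e l xp) w)"
    using assms unfolding ntrot_step_def Let_def by blast
  then show ?thesis
    by (auto simp: is_Lk_def intro: ksparse_if_supp_subset[OF supp_restr])
qed

lemma restr_is_Lk_eq_self:
  assumes S: "is_Lk k x S" and x: "ksparse k x"
  shows "restr S x = x"
proof (rule ccontr)
  assume "restr S x \<noteq> x"
  then obtain j where j: "j \<notin> S" "x $ j \<noteq> 0" by (auto simp: vec_eq_iff split: if_splits)
  have "insert j S \<subseteq> supp x"
  proof
    fix i assume "i \<in> insert j S"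
    then have "\<bar>x $ j\<bar> \<le> \<bar>x $ i\<bar>" using S j(1) by (auto simp: is_Lk_def)
    then show "i \<in> supp x" using j(2) by (auto simp: supp_def)
  qed
  then have "card (insert j S) \<le> card (supp x)" by (intro card_mono) auto
  then show False using S x j(1) by (simp add: is_Lk_def ksparse_iff_card_supp)
qed

lemma LIMSEQ_if_tail_contraction:
  fixes X :: "nat \<Rightarrow> 'a::real_normed_vector"
  assumes r: "r < 1" and step: "\<And>p. norm (X (Suc (Suc p)) - x) \<le> r * norm (X (Suc p) - x)"
  shows "X \<longlonglongrightarrow> x"
proof -
  let ?a = "\<lambda>p. norm (X (Suc p) - x)" and ?r = "max r 0"
  have bound: "?a p \<le> ?r ^ p * ?a 0" for p
  proof (induction p)
    case (Suc p)
    have "?a (Suc p) \<le> r * ?a p" by (rule step)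
    also have "\<dots> \<le> ?r * ?a p" by (intro mult_right_mono) simp_all
    also have "\<dots> \<le> ?r * (?r ^ p * ?a 0)" using Suc by (intro mult_left_mono) auto
    finally show ?case by (simp add: mult_ac)
  qed simp
  have lim: "(\<lambda>p. ?r ^ p * ?a 0) \<longlonglongrightarrow> 0"
    using r by (intro tendsto_mult_left_zero LIMSEQ_power_zero) auto
  have "eventually (\<lambda>p. norm (X (Suc p) - x) \<le> ?r ^ p * ?a 0) sequentially"
    using bound by (simp add: always_eventually)
  then have "(\<lambda>p. X (Suc p) - x) \<longlonglongrightarrow> 0"
    using lim by (rule Lim_null_comparison)
  then have "(\<lambda>p. X (Suc p)) \<longlonglongrightarrow> x"
    by (simp only: Lim_null[symmetric])
  then show ?thesis by (rule LIMSEQ_imp_Suc)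
qed

theorem theorem2:
  fixes A :: "real^'n^'m" and x :: "real^'n" and eta :: "real^'m" and y :: "real^'m"
    and k :: nat and S :: "'n set" and eps lam :: real and xs :: "nat \<Rightarrow> real^'n"
  defines "dk \<equiv> rip_const A k" and "d2k \<equiv> rip_const A (2*k)" and "d3k \<equiv> rip_const A (3*k)"
    and "s1 \<equiv> sigma_max A" and "sm \<equiv> sigma_min A"
  defines "gam \<equiv> 1 / (3 * sqrt ((1 + d3k) / (1 - d3k)) + 1)"
  defines "rho \<equiv> sqrt ((1 + dk) / (1 - d2k)) *
              (d2k + 2 * d3k + 3 * s1\<^sup>2 - 3 * lam * s1\<^sup>2 / (eps + s1\<^sup>2))
            + d3k + s1\<^sup>2 - lam * s1\<^sup>2 / (eps + s1\<^sup>2)"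
    and "tau \<equiv> 1 / sqrt (1 - d2k) * (3 * lam * s1 * sqrt (1 + dk) / (eps + s1\<^sup>2) + 2)
            + lam * s1 / (eps + s1\<^sup>2)"
  assumes mn: "CARD('m) < CARD('n)"
    and y: "y = A *v x + eta"
    and k: "k \<ge> 1"
    and S: "is_Lk k x S"
    and d3: "d3k < 0.2119"
    and eps: "eps > max (s1\<^sup>2) (((s1\<^sup>2 - sm\<^sup>2) / (gam - d3k) - 1) * s1\<^sup>2)"
    and lam1: "eps + s1\<^sup>2 + (d3k - gam) * (eps + s1\<^sup>2) / s1\<^sup>2 < lam"
    and lam2: "lam \<le> eps + sm\<^sup>2"
    and seq: "ntrot_seq A y k eps lam xs"
  shows "rho < 1
    \<and> (\<forall>p. ksparse k (xs (Suc p)))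
    \<and> (\<forall>p. ksparse k (xs p) \<longrightarrow>
          norm (xs (Suc p) - restr S x)
            \<le> rho * norm (xs p - restr S x) + tau * norm (A *v restr (- S) x + eta))
    \<and> (ksparse k x \<and> eta = 0 \<longrightarrow> xs \<longlonglongrightarrow> x)"
proof -
  have rip: "0 \<le> dk" "dk \<le> d2k" "d2k \<le> d3k"
    unfolding dk_def d2k_def d3k_def by (simp_all add: rip_const_nonneg rip_const_mono)
  have d3k: "d3k < 1" using d3 by simp
  have s2: "1 - d3k \<le> s1\<^sup>2"
    using one_minus_rip_le_sigma_max_sq[OF k, of A] rip unfolding s1_def dk_def by linarith
  have se: "s1\<^sup>2 \<le> eps" and e0: "0 < eps + s1\<^sup>2" "0 < eps"
    using eps s2 d3k by auto
  have l0: "0 < lam" and rho1: "rho < 1"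
    using ntrot_parameter_bounds[OF rip d3k s2 e0(1) lam1[unfolded gam_def]]
    unfolding rho_def by simp_all
  have sparse: "ksparse k (xs (Suc p))" for p
    using seq ntrot_step_ksparse unfolding ntrot_seq_def by blast
  have estimate: "norm (xs (Suc p) - restr S x)
      \<le> rho * norm (xs p - restr S x) + tau * norm (A *v restr (- S) x + eta)"
    if "ksparse k (xs p)" for p
    using ntrot_step_error[OF e0(2) l0 lam2[unfolded sm_def] se[unfolded s1_def] d3k[unfolded d3k_def]
        y S that] seq
    unfolding rho_def tau_def ntrot_rho_def ntrot_tau_def ntrot_seq_def dk_def d2k_def d3k_def s1_def
    by blast
  have "xs \<longlonglongrightarrow> x" if "ksparse k x" "eta = 0"
    using estimate[OF sparse] restr_is_Lk_eq_self[OF S that(1)] that(2)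
    by (intro LIMSEQ_if_tail_contraction[OF rho1]) (simp add: restr_Compl_eq_0_iff[THEN iffD2])
  then show ?thesis using rho1 sparse estimate by blast
qed

end
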